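(* In $\mathrm{F}_H$, if $\emptyset \vdash v : T$ for a value $v$, then $v \in [\![T]\!]$, i.e., for every $w \in \mathit{refines}(T)$ we have $w\,v \longrightarrow^* \mathsf{true}$.
   Context: Syntax of $\mathrm{F}_H$. Base types $B$ include $\mathsf{Bool}$; each $B$ has a set $\mathcal{K}_B$ of constants ($\mathcal{K}_{\mathsf{Bool}}=\{\mathsf{true},\mathsf{false}\}$). Primitive operations $\mathtt{op}$ have denotations $[\![\mathtt{op}]\!]$ (partial functions from tuples of constants to constants). Types $T ::= B \mid \alpha \mid x{:}T_1\to T_2 \mid \forall\alpha.T \mid \{x{:}T \mid e\}$; $T_1\to T_2$ abbreviates $x{:}T_1\to T_2$ with $x$ not free in $T_2$. Values $v ::= k \mid \lambda x{:}T.e \mid \Lambda\alpha.e \mid \langle T_1\Rightarrow T_2\rangle^{\ell}$. Terms $e ::= v \mid x \mid \mathtt{op}(e_1,\dots,e_n) \mid e_1\,e_2 \mid e\,T \mid \langle\!\langle \{x{:}T_1\mid e_1\}, e_2\rangle\!\rangle^{\ell} \mid \langle \{x{:}T_1\mid e_1\}, e_2, v\rangle^{\ell} \mid \Uparrow\ell$. Substitution is capture-avoiding; $\mathsf{let}\ y{:}T=e_1\ \mathsf{in}\ e_2$ means $(\lambda y{:}T.e_2)\,e_1$. Semantics. Reduction $\rightsquigarrow$: $\mathtt{op}(k_1,\dots,k_n)\rightsquigarrow[\![\mathtt{op}]\!](k_1,\dots,k_n)$; $(\lambda x{:}T.e)\,v\rightsquigarrow e[v/x]$; $(\Lambda\alpha.e)\,T\rightsquigarrow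 e[T/\alpha]$; $\langle B\Rightarrow B\rangle^\ell v\rightsquigarrow v$; $\langle x{:}T_{11}\to T_{12}\Rightarrow x{:}T_{21}\to T_{22}\rangle^\ell v\rightsquigarrow \lambda x{:}T_{21}.\,\mathsf{let}\ y{:}T_{11}=\langle T_{21}\Rightarrow T_{11}\rangle^\ell x\ \mathsf{in}\ \langle T_{12}[y/x]\Rightarrow T_{22}\rangle^\ell (v\,y)$ ($y$ fresh); $\langle\forall\alpha.T_1\Rightarrow\forall\alpha.T_2\rangle^\ell v\rightsquigarrow\Lambda\alpha.\langle T_1\Rightarrow T_2\rangle^\ell(v\,\alpha)$; $\langle\{x{:}T_1\mid e_1\}\Rightarrow T_2\rangle^\ell v\rightsquigarrow\langle T_1\Rightarrow T_2\rangle^\ell v$; $\langle T_1\Rightarrow\{x{:}T_2\mid e_2\}\rangle^\ell v\rightsquigarrow\langle\!\langle\{x{:}T_2\mid e_2\},\langle T_1\Rightarrow T_2\rangle^\ell v\rangle\!\rangle^\ell$ if $T_1$ is not a refinement type; $\langle\!\langle\{x{:}T\mid e\},v\rangle\!\rangle^\ell\rightsquigarrow\langle\{x{:}T\mid e\},e[v/x],v\rangle^\ell$; $\langle\{x{:}T\mid e\},\mathsf{true},v\rangle^\ell\rightsquigarrow v$; $\langle\{x{:}T\mid e\},\mathsf{false},v\rangle^\ell\rightsquigarrow\Uparrow\ell$. Evaluation contexts $E ::= [\,] \mid \mathtt{op}(v_1,\dots,v_n,E,e_1,\dots,e_m) \mid E\,e \mid v\,E \mid E\,T \mid \langle\!\langle\{x{:}T\mid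 e\},E\rangle\!\rangle^\ell \mid \langle\{x{:}T\mid e\},E,v\rangle^\ell$; $E[e_1]\longrightarrow E[e_2]$ if $e_1\rightsquigarrow e_2$, and $E[\Uparrow\ell]\longrightarrow\Uparrow\ell$ if $E\ne[\,]$; $\longrightarrow^*$ is its reflexive–transitive closure. Typing. Contexts $\Gamma ::= \emptyset \mid \Gamma,x{:}T \mid \Gamma,\alpha$ (distinct variables). Each constant has a type $\mathsf{ty}(k)$ and each operation a type $\mathsf{ty}(\mathtt{op})=x_1{:}T_1\to\dots\to x_n{:}T_n\to T_0$. Let $\mathit{unref}(\{x{:}T\mid e\})=\mathit{unref}(T)$ and $\mathit{unref}(T)=T$ otherwise. Assumed: for $k\in\mathcal{K}_B$, $\mathit{unref}(\mathsf{ty}(k))=B$, $\emptyset\vdash\mathsf{ty}(k)$ and $\langle B\Rightarrow\mathsf{ty}(k)\rangle^\ell k\longrightarrow^* k$; each $\mathit{unref}(T_i)$ ($0\le i\le n$) for $\mathsf{ty}(\mathtt{op})$ is a base type, and if $k_i\in\mathcal{K}_{\mathit{unref}(T_i)}$ with $\langle \mathit{unref}(T_i)\Rightarrow T_i[k_1/x_1,\dots,k_{i-1}/x_{i-1}]\rangle^\ell k_i\longrightarrow^* k_i$ for all $1\le i\le n$, then $[\![\mathtt{op}]\!](k_1,\dots,k_n)=k\in\mathcal{K}_{\mathit{unref}(T_0)}$ with $\langle\mathit{unref}(T_0)\Rightarrow T_0[k_1/x_1,\dots,k_n/x_n]\rangle^\ell k\longrightarrow^* k$, while $[\![\mathtt{op}]\!](k_1,\dots,k_n)$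 is undefined if some $k_i$ fails this condition. Well-formedness: $\vdash\emptyset$; $\vdash\Gamma,x{:}T$ if $\vdash\Gamma$, $\Gamma\vdash T$; $\vdash\Gamma,\alpha$ if $\vdash\Gamma$. $\Gamma\vdash B$ if $\vdash\Gamma$; $\Gamma\vdash\alpha$ if $\vdash\Gamma$, $\alpha\in\Gamma$; $\Gamma\vdash x{:}T_1\to T_2$ if $\Gamma\vdash T_1$ and $\Gamma,x{:}T_1\vdash T_2$; $\Gamma\vdash\forall\alpha.T$ if $\Gamma,\alpha\vdash T$; $\Gamma\vdash\{x{:}T\mid e\}$ if $\Gamma\vdash T$ and $\Gamma,x{:}T\vdash e:\mathsf{Bool}$. Compatibility $T_1\parallel T_2$: $B\parallel B$; $\alpha\parallel\alpha$; $\{x{:}T_1\mid e\}\parallel T_2$ and $T_1\parallel\{x{:}T_2\mid e\}$ if $T_1\parallel T_2$; $x{:}T_{11}\to T_{12}\parallel x{:}T_{21}\to T_{22}$ if $T_{11}\parallel T_{21}$ and $T_{12}\parallel T_{22}$; $\forall\alpha.T_1\parallel\forall\alpha.T_2$ if $T_1\parallel T_2$. Conversion: $T_1\Rrightarrow T_2$ if $T_1=T[e_1/x]$, $T_2=T[e_2/x]$ and $e_1\longrightarrow e_2$ for some $T,x,e_1,e_2$; $\equiv$ is the symmetric transitive closure of $\Rrightarrow$. Typing rules: $\Gamma\vdash x:T$ if $\vdash\Gamma$, $x{:}T\in\Gamma$; $\Gamma\vdash k:\mathsf{ty}(k)$ if $\vdash\Gamma$; $\Gamma\vdash\mathtt{op}(e_1,\dots,e_n):T_0[e_1/x_1,\dots,e_n/x_n]$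 if $\vdash\Gamma$, $\mathsf{ty}(\mathtt{op})=x_1{:}T_1\to\dots\to x_n{:}T_n\to T_0$ and $\Gamma\vdash e_i:T_i[e_1/x_1,\dots,e_{i-1}/x_{i-1}]$ for all $i$; $\Gamma\vdash\lambda x{:}T_1.e:x{:}T_1\to T_2$ if $\Gamma,x{:}T_1\vdash e:T_2$; $\Gamma\vdash\langle T_1\Rightarrow T_2\rangle^\ell:T_1\to T_2$ if $\Gamma\vdash T_1$, $\Gamma\vdash T_2$, $T_1\parallel T_2$; $\Gamma\vdash e_1\,e_2:T_2[e_2/x]$ if $\Gamma\vdash e_1:x{:}T_1\to T_2$, $\Gamma\vdash e_2:T_1$, $\Gamma\vdash T_2[e_2/x]$; $\Gamma\vdash\Lambda\alpha.e:\forall\alpha.T$ if $\Gamma,\alpha\vdash e:T$; $\Gamma\vdash e\,T_2:T_1[T_2/\alpha]$ if $\Gamma\vdash e:\forall\alpha.T_1$, $\Gamma\vdash T_2$; $\Gamma\vdash\langle\!\langle\{x{:}T_1\mid e_1\},e_2\rangle\!\rangle^\ell:\{x{:}T_1\mid e_1\}$ if $\Gamma\vdash\{x{:}T_1\mid e_1\}$, $\Gamma\vdash e_2:T_1$; $\Gamma\vdash\langle\{x{:}T_1\mid e_1\},e_2,v\rangle^\ell:\{x{:}T_1\mid e_1\}$ if $\vdash\Gamma$, $\emptyset\vdash\{x{:}T_1\mid e_1\}$, $\emptyset\vdash v:T_1$, $\emptyset\vdash e_2:\mathsf{Bool}$, $e_1[v/x]\longrightarrow^* e_2$; $\Gamma\vdash\Uparrow\ell:T$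 if $\vdash\Gamma$, $\emptyset\vdash T$; $\Gamma\vdash e:T_2$ if $\vdash\Gamma$, $\emptyset\vdash e:T_1$, $\emptyset\vdash T_2$, $T_1\equiv T_2$; $\Gamma\vdash v:T$ if $\vdash\Gamma$, $\emptyset\vdash v:\{x{:}T\mid e\}$; $\Gamma\vdash v:\{x{:}T\mid e\}$ if $\vdash\Gamma$, $\emptyset\vdash v:T$, $\emptyset\vdash\{x{:}T\mid e\}$, $e[v/x]\longrightarrow^*\mathsf{true}$. Refinements: $\mathit{refines}(\{x{:}T\mid e\})=\{\lambda x{:}T.e\}\cup\mathit{refines}(T)$, and $\mathit{refines}(T)=\emptyset$ if $T$ is not a refinement type. *)

theory Defs
  imports Main
begin

section \<open>Syntax of F_H (locally de Bruijn: one shared index space for term and type variables)\<close>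

text \<open>Index 0 refers to the innermost binder.  Binders: Lam T e binds in e; TLam e binds
  a type variable in e; TFun T1 T2 binds x in T2; TAll T binds alpha in T;
  TRef T e (the refinement type {x:T | e}) binds x in e; Check T e1 e2 l
  (the term <<{x:T|e1}, e2>>^l) and Active T e1 e2 v l (the term <{x:T|e1}, e2, v>^l)
  bind x in e1 only.\<close>

datatype ('b, 'k, 'o) ty =
    TBase 'b
  | TVar nat
  | TFun "('b, 'k, 'o) ty" "('b, 'k, 'o) ty"
  | TAll "('b, 'k, 'o) ty"
  | TRef "('b, 'k, 'o) ty" "('b, 'k, 'o) tm"
and ('b, 'k, 'o) tm =
    Var nat
  | Const 'k
  | Lam "('b, 'k, 'o) ty" "('b, 'k, 'o) tm"
  | TLam "('b, 'k, 'o) tm"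
  | Cast "('b, 'k, 'o) ty" "('b, 'k, 'o) ty" nat
  | Op 'o "('b, 'k, 'o) tm list"
  | App "('b, 'k, 'o) tm" "('b, 'k, 'o) tm"
  | TApp "('b, 'k, 'o) tm" "('b, 'k, 'o) ty"
  | Check "('b, 'k, 'o) ty" "('b, 'k, 'o) tm" "('b, 'k, 'o) tm" nat
  | Active "('b, 'k, 'o) ty" "('b, 'k, 'o) tm" "('b, 'k, 'o) tm" "('b, 'k, 'o) tm" nat
  | Blame nat

primrec shift_ty :: "nat \<Rightarrow> nat \<Rightarrow> ('b,'k,'o) ty \<Rightarrow> ('b,'k,'o) ty"
  and shift_tm :: "nat \<Rightarrow> nat \<Rightarrow> ('b,'k,'o) tm \<Rightarrow> ('b,'k,'o) tm" where
  "shift_ty d c (TBase B) = TBase B"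
| "shift_ty d c (TVar n) = TVar (if n < c then n else n + d)"
| "shift_ty d c (TFun T1 T2) = TFun (shift_ty d c T1) (shift_ty d (Suc c) T2)"
| "shift_ty d c (TAll T) = TAll (shift_ty d (Suc c) T)"
| "shift_ty d c (TRef T e) = TRef (shift_ty d c T) (shift_tm d (Suc c) e)"
| "shift_tm d c (Var n) = Var (if n < c then n else n + d)"
| "shift_tm d c (Const k) = Const k"
| "shift_tm d c (Lam T e) = Lam (shift_ty d c T) (shift_tm d (Suc c) e)"
| "shift_tm d c (TLam e) = TLam (shift_tm d (Suc c) e)"
| "shift_tm d c (Cast T1 T2 l) = Cast (shift_ty d c T1) (shift_ty d c T2) l"
| "shift_tm d c (Op p es) = Op p (map (shift_tm d c) es)"
| "shift_tm d c (App e1 e2) = App (shift_tm d c e1) (shift_tm d c e2)"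
| "shift_tm d c (TApp e T) = TApp (shift_tm d c e) (shift_ty d c T)"
| "shift_tm d c (Check T e1 e2 l) = Check (shift_ty d c T) (shift_tm d (Suc c) e1) (shift_tm d c e2) l"
| "shift_tm d c (Active T e1 e2 v l) =
     Active (shift_ty d c T) (shift_tm d (Suc c) e1) (shift_tm d c e2) (shift_tm d c v) l"
| "shift_tm d c (Blame l) = Blame l"

text \<open>Capture-avoiding substitution of a term s for the term variable with index k
  (the variable is removed from the context; s lives in the context outside it).\<close>
primrec subst_ty :: "nat \<Rightarrow> ('b,'k,'o) tm \<Rightarrow> ('b,'k,'o) ty \<Rightarrow> ('b,'k,'o) ty"
  and subst_tm :: "nat \<Rightarrow> ('b,'k,'o) tm \<Rightarrow> ('b,'k,'o) tm \<Rightarrow> ('b,'k,'o) tm" where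
  "subst_ty k s (TBase B) = TBase B"
| "subst_ty k s (TVar n) = TVar (if k < n then n - 1 else n)"
| "subst_ty k s (TFun T1 T2) = TFun (subst_ty k s T1) (subst_ty (Suc k) s T2)"
| "subst_ty k s (TAll T) = TAll (subst_ty (Suc k) s T)"
| "subst_ty k s (TRef T e) = TRef (subst_ty k s T) (subst_tm (Suc k) s e)"
| "subst_tm k s (Var n) = (if n = k then shift_tm k 0 s else Var (if k < n then n - 1 else n))"
| "subst_tm k s (Const c) = Const c"
| "subst_tm k s (Lam T e) = Lam (subst_ty k s T) (subst_tm (Suc k) s e)"
| "subst_tm k s (TLam e) = TLam (subst_tm (Suc k) s e)"
| "subst_tm k s (Cast T1 T2 l) = Cast (subst_ty k s T1) (subst_ty k s T2) l"
| "subst_tm k s (Op p es) = Op p (map (subst_tm k s) es)"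
| "subst_tm k s (App e1 e2) = App (subst_tm k s e1) (subst_tm k s e2)"
| "subst_tm k s (TApp e T) = TApp (subst_tm k s e) (subst_ty k s T)"
| "subst_tm k s (Check T e1 e2 l) = Check (subst_ty k s T) (subst_tm (Suc k) s e1) (subst_tm k s e2) l"
| "subst_tm k s (Active T e1 e2 v l) =
     Active (subst_ty k s T) (subst_tm (Suc k) s e1) (subst_tm k s e2) (subst_tm k s v) l"
| "subst_tm k s (Blame l) = Blame l"

primrec tsubst_ty :: "nat \<Rightarrow> ('b,'k,'o) ty \<Rightarrow> ('b,'k,'o) ty \<Rightarrow> ('b,'k,'o) ty"
  and tsubst_tm :: "nat \<Rightarrow> ('b,'k,'o) ty \<Rightarrow> ('b,'k,'o) tm \<Rightarrow> ('b,'k,'o) tm" where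
  "tsubst_ty k S (TBase B) = TBase B"
| "tsubst_ty k S (TVar n) = (if n = k then shift_ty k 0 S else TVar (if k < n then n - 1 else n))"
| "tsubst_ty k S (TFun T1 T2) = TFun (tsubst_ty k S T1) (tsubst_ty (Suc k) S T2)"
| "tsubst_ty k S (TAll T) = TAll (tsubst_ty (Suc k) S T)"
| "tsubst_ty k S (TRef T e) = TRef (tsubst_ty k S T) (tsubst_tm (Suc k) S e)"
| "tsubst_tm k S (Var n) = Var (if k < n then n - 1 else n)"
| "tsubst_tm k S (Const c) = Const c"
| "tsubst_tm k S (Lam T e) = Lam (tsubst_ty k S T) (tsubst_tm (Suc k) S e)"
| "tsubst_tm k S (TLam e) = TLam (tsubst_tm (Suc k) S e)"
| "tsubst_tm k S (Cast T1 T2 l) = Cast (tsubst_ty k S T1) (tsubst_ty k S T2) l"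
| "tsubst_tm k S (Op p es) = Op p (map (tsubst_tm k S) es)"
| "tsubst_tm k S (App e1 e2) = App (tsubst_tm k S e1) (tsubst_tm k S e2)"
| "tsubst_tm k S (TApp e T) = TApp (tsubst_tm k S e) (tsubst_ty k S T)"
| "tsubst_tm k S (Check T e1 e2 l) = Check (tsubst_ty k S T) (tsubst_tm (Suc k) S e1) (tsubst_tm k S e2) l"
| "tsubst_tm k S (Active T e1 e2 v l) =
     Active (tsubst_ty k S T) (tsubst_tm (Suc k) S e1) (tsubst_tm k S e2) (tsubst_tm k S v) l"
| "tsubst_tm k S (Blame l) = Blame l"

text \<open>Simultaneous substitution T[e1/x1,...,em/xm], where in T the variable x1 is the
  outermost of the m innermost binders (x_m has index 0).\<close>
fun substs_ty :: "('b,'k,'o) tm list \<Rightarrow> ('b,'k,'o) ty \<Rightarrow> ('b,'k,'o) ty" where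
  "substs_ty [] T = T"
| "substs_ty (e # es) T = substs_ty es (subst_ty (length es) e T)"

fun is_val :: "('b,'k,'o) tm \<Rightarrow> bool" where
  "is_val (Const k) = True"
| "is_val (Lam T e) = True"
| "is_val (TLam e) = True"
| "is_val (Cast T1 T2 l) = True"
| "is_val _ = False"

fun is_ref :: "('b,'k,'o) ty \<Rightarrow> bool" where
  "is_ref (TRef T e) = True"
| "is_ref _ = False"

fun unref :: "('b,'k,'o) ty \<Rightarrow> ('b,'k,'o) ty" where
  "unref (TRef T e) = unref T"
| "unref T = T"

fun refines :: "('b,'k,'o) ty \<Rightarrow> ('b,'k,'o) tm set" where
  "refines (TRef T e) = insert (Lam T e) (refines T)"
| "refines T = {}"

section \<open>Language parameters: base types, constants, primitive operations\<close>

text \<open>boolB is the base type Bool; tt / ff are the constants true / false;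
  cbase k is the base type B with k in K_B; cty k = ty(k);
  oty p = ([T1,...,Tn], T0) for ty(op) = x1:T1 -> ... -> xn:Tn -> T0 (Ti in de Bruijn
  context x1..x(i-1), T0 in context x1..xn); oden p = the partial denotation.\<close>
record ('b, 'k, 'o) fh_sig =
  boolB :: 'b
  tt :: 'k
  ff :: 'k
  cbase :: "'k \<Rightarrow> 'b"
  cty :: "'k \<Rightarrow> ('b,'k,'o) ty"
  oty :: "'o \<Rightarrow> ('b,'k,'o) ty list \<times> ('b,'k,'o) ty"
  oden :: "'o \<Rightarrow> 'k list \<Rightarrow> 'k option"

section \<open>Semantics\<close>

inductive red :: "('b,'k,'o,'x) fh_sig_scheme \<Rightarrow> ('b,'k,'o) tm \<Rightarrow> ('b,'k,'o) tm \<Rightarrow> bool"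
  for L where
  red_op: "oden L p ks = Some k \<Longrightarrow> red L (Op p (map Const ks)) (Const k)"
| red_beta: "is_val v \<Longrightarrow> red L (App (Lam T e) v) (subst_tm 0 v e)"
| red_tbeta: "red L (TApp (TLam e) T) (tsubst_tm 0 T e)"
| red_base: "is_val v \<Longrightarrow> red L (App (Cast (TBase B) (TBase B) l) v) v"
| red_fun: "is_val v \<Longrightarrow> red L (App (Cast (TFun T11 T12) (TFun T21 T22) l) v)
     (Lam T21
        (App (Lam (shift_ty 1 0 T11)
                (App (Cast (shift_ty 1 1 T12) (shift_ty 1 0 T22) l)
                     (App (shift_tm 2 0 v) (Var 0))))
             (App (Cast (shift_ty 1 0 T21) (shift_ty 1 0 T11) l) (Var 0))))"
| red_forall: "is_val v \<Longrightarrow> red L (App (Cast (TAll T1) (TAll T2) l) v)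
     (TLam (App (Cast T1 T2 l) (TApp (shift_tm 1 0 v) (TVar 0))))"
| red_forget: "is_val v \<Longrightarrow> red L (App (Cast (TRef T1 e1) T2 l) v) (App (Cast T1 T2 l) v)"
| red_precheck: "is_val v \<Longrightarrow> \<not> is_ref T1 \<Longrightarrow>
     red L (App (Cast T1 (TRef T2 e2) l) v) (Check T2 e2 (App (Cast T1 T2 l) v) l)"
| red_check: "is_val v \<Longrightarrow> red L (Check T e v l) (Active T e (subst_tm 0 v e) v l)"
| red_ok: "is_val v \<Longrightarrow> red L (Active T e (Const (tt L)) v l) v"
| red_fail: "is_val v \<Longrightarrow> red L (Active T e (Const (ff L)) v l) (Blame l)"

text \<open>Evaluation contexts, as lists of frames (outermost frame first).\<close>
datatype ('b, 'k, 'o) frame =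
    FOp 'o "('b,'k,'o) tm list" "('b,'k,'o) tm list"
  | FAppL "('b,'k,'o) tm"
  | FAppR "('b,'k,'o) tm"
  | FTApp "('b,'k,'o) ty"
  | FCheck "('b,'k,'o) ty" "('b,'k,'o) tm" nat
  | FActive "('b,'k,'o) ty" "('b,'k,'o) tm" "('b,'k,'o) tm" nat

fun frame_ok :: "('b,'k,'o) frame \<Rightarrow> bool" where
  "frame_ok (FOp p vs es) = (\<forall>v \<in> set vs. is_val v)"
| "frame_ok (FAppR v) = is_val v"
| "frame_ok (FActive T e v l) = is_val v"
| "frame_ok _ = True"

fun plug_frame :: "('b,'k,'o) frame \<Rightarrow> ('b,'k,'o) tm \<Rightarrow> ('b,'k,'o) tm" where
  "plug_frame (FOp p vs es) e = Op p (vs @ e # es)"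
| "plug_frame (FAppL e2) e = App e e2"
| "plug_frame (FAppR v) e = App v e"
| "plug_frame (FTApp T) e = TApp e T"
| "plug_frame (FCheck T e1 l) e = Check T e1 e l"
| "plug_frame (FActive T e1 v l) e = Active T e1 e v l"

fun plug :: "('b,'k,'o) frame list \<Rightarrow> ('b,'k,'o) tm \<Rightarrow> ('b,'k,'o) tm" where
  "plug [] e = e"
| "plug (f # E) e = plug_frame f (plug E e)"

inductive step :: "('b,'k,'o,'x) fh_sig_scheme \<Rightarrow> ('b,'k,'o) tm \<Rightarrow> ('b,'k,'o) tm \<Rightarrow> bool"
  for L where
  step_red: "\<forall>f \<in> set E. frame_ok f \<Longrightarrow> red L e1 e2 \<Longrightarrow> step L (plug E e1) (plug E e2)"
| step_blame: "\<forall>f \<in> set E. frame_ok f \<Longrightarrow> E \<noteq> [] \<Longrightarrow> step L (plug E (Blame l)) (Blame l)"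

abbreviation steps :: "('b,'k,'o,'x) fh_sig_scheme \<Rightarrow> ('b,'k,'o) tm \<Rightarrow> ('b,'k,'o) tm \<Rightarrow> bool" where
  "steps L \<equiv> (step L)\<^sup>*\<^sup>*"

section \<open>Typing\<close>

datatype ('b, 'k, 'o) entry = EVar "('b,'k,'o) ty" | ETVar

text \<open>Contexts: the head of the list is the innermost (most recently added) entry.\<close>
type_synonym ('b, 'k, 'o) ctx = "('b,'k,'o) entry list"

inductive compat :: "('b,'k,'o) ty \<Rightarrow> ('b,'k,'o) ty \<Rightarrow> bool" where
  "compat (TBase B) (TBase B)"
| "compat (TVar a) (TVar a)"
| "compat T1 T2 \<Longrightarrow> compat (TRef T1 e) T2"
| "compat T1 T2 \<Longrightarrow> compat T1 (TRef T2 e)"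
| "compat T11 T21 \<Longrightarrow> compat T12 T22 \<Longrightarrow> compat (TFun T11 T12) (TFun T21 T22)"
| "compat T1 T2 \<Longrightarrow> compat (TAll T1) (TAll T2)"

definition conv1 :: "('b,'k,'o,'x) fh_sig_scheme \<Rightarrow> ('b,'k,'o) ty \<Rightarrow> ('b,'k,'o) ty \<Rightarrow> bool" where
  "conv1 L T1 T2 \<longleftrightarrow> (\<exists>T e1 e2. T1 = subst_ty 0 e1 T \<and> T2 = subst_ty 0 e2 T \<and> step L e1 e2)"

definition tyequiv :: "('b,'k,'o,'x) fh_sig_scheme \<Rightarrow> ('b,'k,'o) ty \<Rightarrow> ('b,'k,'o) ty \<Rightarrow> bool" where
  "tyequiv L = (\<lambda>T1 T2. conv1 L T1 T2 \<or> conv1 L T2 T1)\<^sup>+\<^sup>+"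

inductive wfctx :: "('b,'k,'o,'x) fh_sig_scheme \<Rightarrow> ('b,'k,'o) ctx \<Rightarrow> bool"
  and wfty :: "('b,'k,'o,'x) fh_sig_scheme \<Rightarrow> ('b,'k,'o) ctx \<Rightarrow> ('b,'k,'o) ty \<Rightarrow> bool"
  and typing :: "('b,'k,'o,'x) fh_sig_scheme \<Rightarrow> ('b,'k,'o) ctx \<Rightarrow> ('b,'k,'o) tm \<Rightarrow> ('b,'k,'o) ty \<Rightarrow> bool"
  for L where
  wf_empty: "wfctx L []"
| wf_var: "wfctx L G \<Longrightarrow> wfty L G T \<Longrightarrow> wfctx L (EVar T # G)"
| wf_tvar: "wfctx L G \<Longrightarrow> wfctx L (ETVar # G)"
| wfty_base: "wfctx L G \<Longrightarrow> wfty L G (TBase B)"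
| wfty_tvar: "wfctx L G \<Longrightarrow> a < length G \<Longrightarrow> G ! a = ETVar \<Longrightarrow> wfty L G (TVar a)"
| wfty_fun: "wfty L G T1 \<Longrightarrow> wfty L (EVar T1 # G) T2 \<Longrightarrow> wfty L G (TFun T1 T2)"
| wfty_all: "wfty L (ETVar # G) T \<Longrightarrow> wfty L G (TAll T)"
| wfty_ref: "wfty L G T \<Longrightarrow> typing L (EVar T # G) e (TBase (boolB L)) \<Longrightarrow> wfty L G (TRef T e)"
| t_var: "wfctx L G \<Longrightarrow> x < length G \<Longrightarrow> G ! x = EVar T \<Longrightarrow>
     typing L G (Var x) (shift_ty (Suc x) 0 T)"
| t_const: "wfctx L G \<Longrightarrow> typing L G (Const k) (cty L k)"
| t_op: "wfctx L G \<Longrightarrow> oty L p = (Ts, T0) \<Longrightarrow> length es = length Ts \<Longrightarrow>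
     (\<forall>i < length Ts. typing L G (es ! i) (substs_ty (take i es) (Ts ! i))) \<Longrightarrow>
     typing L G (Op p es) (substs_ty es T0)"
| t_lam: "typing L (EVar T1 # G) e T2 \<Longrightarrow> typing L G (Lam T1 e) (TFun T1 T2)"
| t_cast: "wfty L G T1 \<Longrightarrow> wfty L G T2 \<Longrightarrow> compat T1 T2 \<Longrightarrow>
     typing L G (Cast T1 T2 l) (TFun T1 (shift_ty 1 0 T2))"
| t_app: "typing L G e1 (TFun T1 T2) \<Longrightarrow> typing L G e2 T1 \<Longrightarrow> wfty L G (subst_ty 0 e2 T2) \<Longrightarrow>
     typing L G (App e1 e2) (subst_ty 0 e2 T2)"
| t_tlam: "typing L (ETVar # G) e T \<Longrightarrow> typing L G (TLam e) (TAll T)"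
| t_tapp: "typing L G e (TAll T1) \<Longrightarrow> wfty L G T2 \<Longrightarrow> typing L G (TApp e T2) (tsubst_ty 0 T2 T1)"
| t_check: "wfty L G (TRef T1 e1) \<Longrightarrow> typing L G e2 T1 \<Longrightarrow>
     typing L G (Check T1 e1 e2 l) (TRef T1 e1)"
| t_active: "wfctx L G \<Longrightarrow> wfty L [] (TRef T1 e1) \<Longrightarrow> is_val v \<Longrightarrow> typing L [] v T1 \<Longrightarrow>
     typing L [] e2 (TBase (boolB L)) \<Longrightarrow> steps L (subst_tm 0 v e1) e2 \<Longrightarrow>
     typing L G (Active T1 e1 e2 v l) (TRef T1 e1)"
| t_blame: "wfctx L G \<Longrightarrow> wfty L [] T \<Longrightarrow> typing L G (Blame l) T"
| t_conv: "wfctx L G \<Longrightarrow> typing L [] e T1 \<Longrightarrow> wfty L [] T2 \<Longrightarrow> tyequiv L T1 T2 \<Longrightarrow>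
     typing L G e T2"
| t_forget: "wfctx L G \<Longrightarrow> is_val v \<Longrightarrow> typing L [] v (TRef T e) \<Longrightarrow> typing L G v T"
| t_exact: "wfctx L G \<Longrightarrow> is_val v \<Longrightarrow> typing L [] v T \<Longrightarrow> wfty L [] (TRef T e) \<Longrightarrow>
     steps L (subst_tm 0 v e) (Const (tt L)) \<Longrightarrow> typing L G v (TRef T e)"

section \<open>Standing assumptions on constants and operations\<close>

definition op_arg_ok :: "('b,'k,'o,'x) fh_sig_scheme \<Rightarrow> ('b,'k,'o) ty \<Rightarrow> 'k list \<Rightarrow> 'k \<Rightarrow> bool" where
  "op_arg_ok L Ti prev k \<longleftrightarrow>
     unref Ti = TBase (cbase L k) \<and>
     (\<forall>l. steps L (App (Cast (unref Ti) (substs_ty (map Const prev) Ti) l) (Const k)) (Const k))"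

definition fh_sig_ok :: "('b,'k,'o,'x) fh_sig_scheme \<Rightarrow> bool" where
  "fh_sig_ok L \<longleftrightarrow>
     tt L \<noteq> ff L \<and> cbase L (tt L) = boolB L \<and> cbase L (ff L) = boolB L \<and>
     (\<forall>k. cbase L k = boolB L \<longrightarrow> k = tt L \<or> k = ff L) \<and>
     (\<forall>k. unref (cty L k) = TBase (cbase L k) \<and> wfty L [] (cty L k) \<and>
          (\<forall>l. steps L (App (Cast (TBase (cbase L k)) (cty L k) l) (Const k)) (Const k))) \<and>
     (\<forall>p Ts T0. oty L p = (Ts, T0) \<longrightarrow>
        (\<forall>T \<in> set (T0 # Ts). \<exists>B. unref T = TBase B) \<and>
        (\<forall>ks. length ks \<noteq> length Ts \<longrightarrow> oden L p ks = None) \<and>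
        (\<forall>ks. length ks = length Ts \<longrightarrow>
           ((\<forall>i < length Ts. op_arg_ok L (Ts ! i) (take i ks) (ks ! i)) \<longrightarrow>
              (\<exists>k. oden L p ks = Some k \<and> op_arg_ok L T0 ks k)) \<and>
           (\<not> (\<forall>i < length Ts. op_arg_ok L (Ts ! i) (take i ks) (ks ! i)) \<longrightarrow>
              oden L p ks = None)))"

end

(*
  Only T_Const, T_Conv, T_Forget and
  T_Exact can give a value a type with refinements: lambdas, type abstractions and casts get
  function or polymorphic types.  For T_Const we use the
  assumption that the cast from the base type to ty(k) returns k: that cast checks the
  refinements of ty(k) one after another, so each of them accepts k.

  The substantial case is T_Conv, where the type changes between T[e1/x] and T[e2/x] for a
  step e1 --> e2.  It needs cotermination: a term containing e1 at some places reduces to true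
  iff the term with e2 at these places does.  This follows from a forward and a backward
  simulation between such pairs of terms, both of which rely on reduction being deterministic.
*)
theory Submission
  imports Defs
begin

section \<open>Shifting and substitution\<close>

lemma shift_zero:
  fixes T :: "('b,'k,'o) ty" and e :: "('b,'k,'o) tm"
  shows "shift_ty 0 c T = T" and "shift_tm 0 c e = e"
  by (induct T and e arbitrary: c and c rule: ty.induct tm.induct) (auto intro: map_idI)

lemma shift_shift:
  fixes T :: "('b,'k,'o) ty" and e :: "('b,'k,'o) tm"
  shows "t \<le> c \<Longrightarrow> c \<le> t + n \<Longrightarrow> shift_ty d c (shift_ty n t T) = shift_ty (d + n) t T"
    and "t \<le> c \<Longrightarrow> c \<le> t + n \<Longrightarrow> shift_tm d c (shift_tm n t e) = shift_tm (d + n) t e"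
  by (induct T and e arbitrary: t c and t c rule: ty.induct tm.induct) auto

lemma subst_shift:
  fixes T :: "('b,'k,'o) ty" and e :: "('b,'k,'o) tm"
  shows "t \<le> k \<Longrightarrow> k \<le> t + n \<Longrightarrow> subst_ty k s (shift_ty (Suc n) t T) = shift_ty n t T"
    and "t \<le> k \<Longrightarrow> k \<le> t + n \<Longrightarrow> subst_tm k s (shift_tm (Suc n) t e) = shift_tm n t e"
  by (induct T and e arbitrary: t k and t k rule: ty.induct tm.induct) auto

lemma tsubst_shift:
  fixes T :: "('b,'k,'o) ty" and e :: "('b,'k,'o) tm"
  shows "t \<le> k \<Longrightarrow> k \<le> t + n \<Longrightarrow> tsubst_ty k S (shift_ty (Suc n) t T) = shift_ty n t T"
    and "t \<le> k \<Longrightarrow> k \<le> t + n \<Longrightarrow> tsubst_tm k S (shift_tm (Suc n) t e) = shift_tm n t e"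
  by (induct T and e arbitrary: t k and t k rule: ty.induct tm.induct) auto

lemma is_val_shift_tm [simp]: "is_val (shift_tm d c e) = is_val e"
  by (cases e) auto

lemma is_val_subst_tm: "is_val e \<Longrightarrow> is_val (subst_tm k s e)"
  by (cases e) auto

lemma is_val_tsubst_tm: "is_val e \<Longrightarrow> is_val (tsubst_tm k S e)"
  by (cases e) auto

section \<open>Reduction by congruence rules\<close>

(* A congruence-rule presentation of step without blame propagation, which is irrelevant
   for reaching a constant.  The rule cstep_active_val has no counterpart in step: it is needed
   because substituting e1 for a variable may put a non-value into the value slot of an active
   check.  On terms satisfying active_ok below, cstep is a restriction of step. *)

inductive cstep :: "('b,'k,'o,'x) fh_sig_scheme \<Rightarrow> ('b,'k,'o) tm \<Rightarrow> ('b,'k,'o) tm \<Rightarrow> bool"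
  for L where
  cstep_red: "red L a b \<Longrightarrow> cstep L a b"
| cstep_app1: "cstep L a a' \<Longrightarrow> cstep L (App a b) (App a' b)"
| cstep_app2: "is_val v \<Longrightarrow> cstep L b b' \<Longrightarrow> cstep L (App v b) (App v b')"
| cstep_tapp: "cstep L a a' \<Longrightarrow> cstep L (TApp a T) (TApp a' T)"
| cstep_op: "\<forall>v \<in> set vs. is_val v \<Longrightarrow> cstep L a a' \<Longrightarrow>
    cstep L (Op p (vs @ a # es)) (Op p (vs @ a' # es))"
| cstep_check: "cstep L a a' \<Longrightarrow> cstep L (Check T e a l) (Check T e a' l)"
| cstep_active: "is_val v \<Longrightarrow> cstep L a a' \<Longrightarrow> cstep L (Active T e a v l) (Active T e a' v l)"
| cstep_active_val: "cstep L v v' \<Longrightarrow> cstep L (Active T e a v l) (Active T e a v' l)"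

abbreviation csteps :: "('b,'k,'o,'x) fh_sig_scheme \<Rightarrow> ('b,'k,'o) tm \<Rightarrow> ('b,'k,'o) tm \<Rightarrow> bool" where
  "csteps L \<equiv> (cstep L)\<^sup>*\<^sup>*"

lemma cstep_not_val: "cstep L a b \<Longrightarrow> \<not> is_val a"
  by (induct rule: cstep.induct) (auto elim: red.cases)

lemma red_subterms_val:
  shows "red L (App a b) c \<Longrightarrow> is_val a \<and> is_val b"
    and "red L (TApp a T) c \<Longrightarrow> is_val a"
    and "red L (Op p es) c \<Longrightarrow> \<forall>e \<in> set es. is_val e"
    and "red L (Check T e a l) c \<Longrightarrow> is_val a"
    and "red L (Active T e a v l) c \<Longrightarrow> is_val a \<and> is_val v"
  by (auto elim!: red.cases)

lemma vals_append_unique: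
  assumes "\<forall>v \<in> set vs. is_val v" "\<forall>v \<in> set vs'. is_val v" "\<not> is_val a" "\<not> is_val a'"
    and "vs @ a # es = vs' @ a' # es'"
  shows "vs = vs' \<and> a = a' \<and> es = es'"
  using assms
proof (induct vs arbitrary: vs')
  case Nil then show ?case by (cases vs') auto
next
  case (Cons x vs) then show ?case by (cases vs') auto
qed

lemma red_deterministic:
  assumes "tt L \<noteq> ff L" shows "red L a b \<Longrightarrow> red L a c \<Longrightarrow> b = c"
  by (induct rule: red.induct) (erule red.cases; use assms in \<open>simp add: inj_map_eq_map inj_def\<close>)+

lemma red_cstep_eq:
  assumes "tt L \<noteq> ff L" "red L a b" "cstep L a c" shows "b = c"
  using assms(3,2)
proof cases
  case (cstep_op vs a' a'' p es)
  then show ?thesis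
    using assms(2) by (auto dest!: red_subterms_val(3) cstep_not_val)
qed (use assms in \<open>auto dest: red_deterministic red_subterms_val cstep_not_val\<close>)

lemma cstep_deterministic:
  assumes "tt L \<noteq> ff L" shows "cstep L a b \<Longrightarrow> cstep L a c \<Longrightarrow> b = c"
proof (induct arbitrary: c rule: cstep.induct)
  case (cstep_red a b)
  then show ?case using red_cstep_eq[OF assms] by blast
next
  case (cstep_app1 a a' b)
  from cstep_app1(3) show ?case
    using cstep_app1(1) by cases (auto dest: red_subterms_val cstep_not_val cstep_app1(2))
next
  case (cstep_app2 v b b')
  from cstep_app2(4) show ?case
    using cstep_app2(1,2) by cases (auto dest: red_subterms_val cstep_not_val cstep_app2(3))
next
  case (cstep_tapp a a' T)
  from cstep_tapp(3) show ?case
    using cstep_tapp(1) by cases (auto dest: red_subterms_val cstep_not_val cstep_tapp(2))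
next
  case (cstep_op vs a a' p es)
  from cstep_op(4) show ?case
  proof cases
    case cstep_red
    then show ?thesis using red_cstep_eq[OF assms] cstep.cstep_op[OF cstep_op(1,2)] by metis
  next
    case (cstep_op vs' b b' es')
    with \<open>cstep L a a'\<close> \<open>\<forall>v \<in> set vs. is_val v\<close> have "vs = vs' \<and> a = b \<and> es = es'"
      by (intro vals_append_unique) (auto dest: cstep_not_val)
    with cstep_op \<open>\<And>c. cstep L a c \<Longrightarrow> a' = c\<close> show ?thesis by auto
  qed
next
  case (cstep_check a a' T e l)
  from cstep_check(3) show ?case
    using cstep_check(1) by cases (auto dest: red_subterms_val cstep_not_val cstep_check(2))
next
  case (cstep_active v a a' T e l)
  from cstep_active(4) show ?case
    using cstep_active(1,2) by cases (auto dest: red_subterms_val cstep_not_val cstep_active(3))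
next
  case (cstep_active_val v v' T e a l)
  from cstep_active_val(3) show ?case
    using cstep_active_val(1) by cases (auto dest: red_subterms_val cstep_not_val cstep_active_val(2))
qed

lemma cstep_plug_frame_inv:
  assumes "frame_ok f" "\<not> is_val a" "cstep L (plug_frame f a) b"
  shows "\<exists>a'. cstep L a a' \<and> b = plug_frame f a'"
proof (cases f)
  case (FOp p vs es)
  from assms(3) have "cstep L (Op p (vs @ a # es)) b" using FOp by simp
  then show ?thesis
  proof cases
    case (cstep_op vs' c c' es')
    with FOp assms(1,2) have "vs = vs' \<and> a = c \<and> es = es'"
      by (intro vals_append_unique) (auto dest: cstep_not_val)
    with cstep_op FOp show ?thesis by auto
  qed (use assms(2) in \<open>auto dest: red_subterms_val\<close>)
next
  case (FAppL c)
  from assms(3) show ?thesis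
    unfolding FAppL by cases (use assms(1,2) in \<open>auto simp: FAppL dest: red_subterms_val cstep_not_val\<close>)
next
  case (FAppR c)
  from assms(3) show ?thesis
    unfolding FAppR by cases (use assms(1,2) in \<open>auto simp: FAppR dest: red_subterms_val cstep_not_val\<close>)
next
  case (FTApp T)
  from assms(3) show ?thesis
    unfolding FTApp by cases (use assms(1,2) in \<open>auto simp: FTApp dest: red_subterms_val cstep_not_val\<close>)
next
  case (FCheck T e l)
  from assms(3) show ?thesis
    unfolding FCheck by cases (use assms(1,2) in \<open>auto simp: FCheck dest: red_subterms_val cstep_not_val\<close>)
next
  case (FActive T e v l)
  from assms(3) show ?thesis
    unfolding FActive by cases (use assms(1,2) in \<open>auto simp: FActive dest: red_subterms_val cstep_not_val\<close>)
qed

lemma plug_blame_stuck: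
  assumes "\<forall>f \<in> set E. frame_ok f"
  shows "\<not> is_val (plug E (Blame l)) \<and> (\<forall>b. \<not> cstep L (plug E (Blame l)) b)"
  using assms
proof (induct E)
  case Nil
  then show ?case by (auto elim: cstep.cases red.cases)
next
  case (Cons f E)
  then have "\<not> cstep L (plug_frame f (plug E (Blame l))) b" for b
    using cstep_plug_frame_inv[of f "plug E (Blame l)" L b] by auto
  moreover have "\<not> is_val (plug_frame f x)" for x :: "('a, 'b, 'c) tm"
    by (cases f) auto
  ultimately show ?case by simp
qed

lemma cstep_plug:
  "\<forall>f \<in> set E. frame_ok f \<Longrightarrow> cstep L a b \<Longrightarrow> cstep L (plug E a) (plug E b)"
proof (induct E)
  case (Cons f E)
  then show ?case by (cases f) (auto intro: cstep.intros)
qed simp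

lemma step_cstep_or_blame:
  "step L a b \<Longrightarrow>
     cstep L a b \<or> (\<exists>E l. (\<forall>f \<in> set E. frame_ok f) \<and> E \<noteq> [] \<and> a = plug E (Blame l) \<and> b = Blame l)"
  by (induct rule: step.induct) (auto intro: cstep_plug cstep_red)

lemma plug_eq_Blame: "plug E a = Blame l \<longleftrightarrow> E = [] \<and> a = Blame l"
proof (cases E)
  case (Cons f E')
  then show ?thesis by (cases f) auto
qed simp

lemma Blame_no_step: "\<not> step L (Blame l) b"
  by (rule notI, erule step.cases) (auto simp: plug_eq_Blame eq_commute[of "Blame l"] elim: red.cases)

lemma steps_imp_csteps: "steps L a b \<Longrightarrow> (\<And>l. b \<noteq> Blame l) \<Longrightarrow> csteps L a b"
proof (induct rule: converse_rtranclp_induct)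
  case (step a y)
  show ?case
  proof (cases "cstep L a y")
    case False
    then obtain l where "y = Blame l" using step(1) step_cstep_or_blame by blast
    with step(2,4) Blame_no_step show ?thesis by (metis converse_rtranclpE)
  qed (use step in \<open>auto intro: converse_rtranclp_into_rtranclp\<close>)
qed simp

lemma Blame_not_csteps_Const: "csteps L (Blame l) (Const k) \<Longrightarrow> False"
  using plug_blame_stuck[of "[]" l L] by (auto elim: converse_rtranclpE)

lemma cstep_preserves_csteps_Const:
  assumes "tt L \<noteq> ff L" "cstep L a a'" "csteps L a (Const k)"
  shows "csteps L a' (Const k)"
  using assms(3)
proof (cases rule: converse_rtranclpE)
  case base
  with assms(2) show ?thesis by (auto dest: cstep_not_val)
next
  case (step y)
  from assms(2) step(1) have "a' = y" by (rule cstep_deterministic[OF assms(1)])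
  with step show ?thesis by simp
qed

lemma rtranclp_map:
  assumes "\<And>x y. r x y \<Longrightarrow> s (f x) (f y)"
  shows "r\<^sup>*\<^sup>* a b \<Longrightarrow> s\<^sup>*\<^sup>* (f a) (f b)"
  by (induct rule: rtranclp_induct) (auto intro: rtranclp.rtrancl_into_rtrancl assms)

lemma csteps_App:
  assumes "csteps L x x'" "is_val x'" "csteps L y y'"
  shows "csteps L (App x y) (App x' y')"
  using rtranclp_map[of "cstep L" "cstep L" "\<lambda>z. App z y", OF cstep_app1 assms(1)]
    rtranclp_map[of "cstep L" "cstep L" "App x'", OF cstep_app2[OF assms(2)] assms(3)]
  by simp

lemma csteps_TApp: "csteps L x x' \<Longrightarrow> csteps L (TApp x T) (TApp x' T)"
  using rtranclp_map[of "cstep L" "cstep L" "\<lambda>z. TApp z T", OF cstep_tapp] .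

lemma csteps_Check: "csteps L x x' \<Longrightarrow> csteps L (Check T e x l) (Check T e x' l)"
  using rtranclp_map[of "cstep L" "cstep L" "\<lambda>z. Check T e z l", OF cstep_check] .

lemma csteps_Active:
  assumes "csteps L v v'" "is_val v'" "csteps L c c'"
  shows "csteps L (Active T e c v l) (Active T e c' v' l)"
  using rtranclp_map[of "cstep L" "cstep L" "\<lambda>z. Active T e c z l", OF cstep_active_val assms(1)]
    rtranclp_map[of "cstep L" "cstep L" "\<lambda>z. Active T e z v' l", OF cstep_active[OF assms(2)] assms(3)]
  by simp

inductive_cases red_Cast_AppE
  [consumes 1, case_names cast_base cast_fun cast_forall cast_forget cast_precheck]:
  "red L (App (Cast T1 T2 l) v) b"

section \<open>Active checks with values in their value slot\<close>

primrec active_ok_ty :: "('b,'k,'o) ty \<Rightarrow> bool" and active_ok_tm :: "('b,'k,'o) tm \<Rightarrow> bool" where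
  "active_ok_ty (TBase B) = True"
| "active_ok_ty (TVar n) = True"
| "active_ok_ty (TFun T1 T2) = (active_ok_ty T1 \<and> active_ok_ty T2)"
| "active_ok_ty (TAll T) = active_ok_ty T"
| "active_ok_ty (TRef T e) = (active_ok_ty T \<and> active_ok_tm e)"
| "active_ok_tm (Var n) = True"
| "active_ok_tm (Const k) = True"
| "active_ok_tm (Lam T e) = (active_ok_ty T \<and> active_ok_tm e)"
| "active_ok_tm (TLam e) = active_ok_tm e"
| "active_ok_tm (Cast T1 T2 l) = (active_ok_ty T1 \<and> active_ok_ty T2)"
| "active_ok_tm (Op p es) = list_all active_ok_tm es"
| "active_ok_tm (App e1 e2) = (active_ok_tm e1 \<and> active_ok_tm e2)"
| "active_ok_tm (TApp e T) = (active_ok_tm e \<and> active_ok_ty T)"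
| "active_ok_tm (Check T e1 e2 l) = (active_ok_ty T \<and> active_ok_tm e1 \<and> active_ok_tm e2)"
| "active_ok_tm (Active T e1 e2 v l) =
     (active_ok_ty T \<and> active_ok_tm e1 \<and> active_ok_tm e2 \<and> active_ok_tm v \<and> is_val v)"
| "active_ok_tm (Blame l) = True"

lemma active_ok_shift [simp]:
  fixes T :: "('b,'k,'o) ty" and e :: "('b,'k,'o) tm"
  shows "active_ok_ty (shift_ty d c T) = active_ok_ty T"
    and "active_ok_tm (shift_tm d c e) = active_ok_tm e"
  by (induct T and e arbitrary: c and c rule: ty.induct tm.induct) (auto simp: list_all_iff)

lemma active_ok_subst:
  fixes T :: "('b,'k,'o) ty" and e :: "('b,'k,'o) tm"
  shows "active_ok_tm s \<Longrightarrow> active_ok_ty T \<Longrightarrow> active_ok_ty (subst_ty k s T)"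
    and "active_ok_tm s \<Longrightarrow> active_ok_tm e \<Longrightarrow> active_ok_tm (subst_tm k s e)"
  by (induct T and e arbitrary: k and k rule: ty.induct tm.induct)
     (auto simp: is_val_subst_tm list_all_iff)

lemma active_ok_tsubst:
  fixes T :: "('b,'k,'o) ty" and e :: "('b,'k,'o) tm"
  shows "active_ok_ty S \<Longrightarrow> active_ok_ty T \<Longrightarrow> active_ok_ty (tsubst_ty k S T)"
    and "active_ok_ty S \<Longrightarrow> active_ok_tm e \<Longrightarrow> active_ok_tm (tsubst_tm k S e)"
  by (induct T and e arbitrary: k and k rule: ty.induct tm.induct)
     (auto simp: is_val_tsubst_tm list_all_iff)

lemma red_active_ok: "red L a b \<Longrightarrow> active_ok_tm a \<Longrightarrow> active_ok_tm b"
  by (induct rule: red.induct) (auto simp: active_ok_subst active_ok_tsubst list_all_iff)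

lemma cstep_active_ok: "cstep L a b \<Longrightarrow> active_ok_tm a \<Longrightarrow> active_ok_tm b"
  by (induct rule: cstep.induct) (auto simp: red_active_ok dest: cstep_not_val)

lemma cstep_imp_step:
  assumes "cstep L a b" "active_ok_tm a"
  shows "step L a b"
proof -
  have "\<exists>E x y. (\<forall>f \<in> set E. frame_ok f) \<and> red L x y \<and> a = plug E x \<and> b = plug E y"
    using assms
  proof (induct rule: cstep.induct)
    case (cstep_red a b)
    show ?case by (rule exI[of _ "[]"]) (use cstep_red in auto)
  next
    case (cstep_app1 a a' b)
    then obtain E x y where "\<forall>f \<in> set E. frame_ok f" "red L x y" "a = plug E x" "a' = plug E y" by auto
    then show ?case by (intro exI[of _ "FAppL b # E"]) auto
  next
    case (cstep_app2 v b b')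
    then obtain E x y where "\<forall>f \<in> set E. frame_ok f" "red L x y" "b = plug E x" "b' = plug E y" by auto
    with cstep_app2(1) show ?case by (intro exI[of _ "FAppR v # E"]) auto
  next
    case (cstep_tapp a a' T)
    then obtain E x y where "\<forall>f \<in> set E. frame_ok f" "red L x y" "a = plug E x" "a' = plug E y" by auto
    then show ?case by (intro exI[of _ "FTApp T # E"]) auto
  next
    case (cstep_op vs a a' p es)
    then obtain E x y where "\<forall>f \<in> set E. frame_ok f" "red L x y" "a = plug E x" "a' = plug E y"
      by auto
    with cstep_op(1) show ?case by (intro exI[of _ "FOp p vs es # E"]) auto
  next
    case (cstep_check a a' T e l)
    then obtain E x y where "\<forall>f \<in> set E. frame_ok f" "red L x y" "a = plug E x" "a' = plug E y" by auto
    then show ?case by (intro exI[of _ "FCheck T e l # E"]) auto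
  next
    case (cstep_active v a a' T e l)
    then obtain E x y where "\<forall>f \<in> set E. frame_ok f" "red L x y" "a = plug E x" "a' = plug E y" by auto
    with cstep_active(1) show ?case by (intro exI[of _ "FActive T e v l # E"]) auto
  next
    case (cstep_active_val v v' T e a l)
    then show ?case by (auto dest: cstep_not_val)
  qed
  then show ?thesis by (auto intro: step_red)
qed

lemma csteps_imp_steps: "csteps L a b \<Longrightarrow> active_ok_tm a \<Longrightarrow> steps L a b"
  by (induct rule: converse_rtranclp_induct)
     (auto intro: converse_rtranclp_into_rtranclp cstep_imp_step cstep_active_ok)

lemma typing_active_ok:
  shows "wfctx L G \<Longrightarrow> \<forall>T. EVar T \<in> set G \<longrightarrow> active_ok_ty T"
    and "wfty L G T \<Longrightarrow> active_ok_ty T \<and> (\<forall>T. EVar T \<in> set G \<longrightarrow> active_ok_ty T)"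
    and "typing L G e T \<Longrightarrow> active_ok_tm e \<and> (\<forall>T. EVar T \<in> set G \<longrightarrow> active_ok_ty T)"
  by (induct rule: wfctx_wfty_typing.inducts) (auto simp: list_all_length)

section \<open>Terms that differ at occurrences of a subterm\<close>

(* holes_tm e1 e2 n a b: b arises from a by replacing some occurrences of e1, shifted over
   the n binders above them, by e2.  It contains the pairs subst_tm 0 e1 e, subst_tm 0 e2 e
   (holes_subst_same) and, unlike them, is preserved by reduction. *)

inductive holes_ty :: "('b,'k,'o) tm \<Rightarrow> ('b,'k,'o) tm \<Rightarrow> nat \<Rightarrow> ('b,'k,'o) ty \<Rightarrow> ('b,'k,'o) ty \<Rightarrow> bool"
  and holes_tm :: "('b,'k,'o) tm \<Rightarrow> ('b,'k,'o) tm \<Rightarrow> nat \<Rightarrow> ('b,'k,'o) tm \<Rightarrow> ('b,'k,'o) tm \<Rightarrow> bool"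
  for e1 e2 where
  holes_TBase: "holes_ty e1 e2 n (TBase B) (TBase B)"
| holes_TVar: "holes_ty e1 e2 n (TVar a) (TVar a)"
| holes_TFun: "holes_ty e1 e2 n T1 T1' \<Longrightarrow> holes_ty e1 e2 (Suc n) T2 T2' \<Longrightarrow>
    holes_ty e1 e2 n (TFun T1 T2) (TFun T1' T2')"
| holes_TAll: "holes_ty e1 e2 (Suc n) T T' \<Longrightarrow> holes_ty e1 e2 n (TAll T) (TAll T')"
| holes_TRef: "holes_ty e1 e2 n T T' \<Longrightarrow> holes_tm e1 e2 (Suc n) e e' \<Longrightarrow>
    holes_ty e1 e2 n (TRef T e) (TRef T' e')"
| holes_hole: "holes_tm e1 e2 n (shift_tm n 0 e1) (shift_tm n 0 e2)"
| holes_Var: "holes_tm e1 e2 n (Var x) (Var x)"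
| holes_Const: "holes_tm e1 e2 n (Const c) (Const c)"
| holes_Lam: "holes_ty e1 e2 n T T' \<Longrightarrow> holes_tm e1 e2 (Suc n) e e' \<Longrightarrow>
    holes_tm e1 e2 n (Lam T e) (Lam T' e')"
| holes_TLam: "holes_tm e1 e2 (Suc n) e e' \<Longrightarrow> holes_tm e1 e2 n (TLam e) (TLam e')"
| holes_Cast: "holes_ty e1 e2 n T1 T1' \<Longrightarrow> holes_ty e1 e2 n T2 T2' \<Longrightarrow>
    holes_tm e1 e2 n (Cast T1 T2 l) (Cast T1' T2' l)"
| holes_Op: "list_all2 (holes_tm e1 e2 n) es es' \<Longrightarrow> holes_tm e1 e2 n (Op p es) (Op p es')"
| holes_App: "holes_tm e1 e2 n a a' \<Longrightarrow> holes_tm e1 e2 n b b' \<Longrightarrow>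
    holes_tm e1 e2 n (App a b) (App a' b')"
| holes_TApp: "holes_tm e1 e2 n a a' \<Longrightarrow> holes_ty e1 e2 n T T' \<Longrightarrow>
    holes_tm e1 e2 n (TApp a T) (TApp a' T')"
| holes_Check: "holes_ty e1 e2 n T T' \<Longrightarrow> holes_tm e1 e2 (Suc n) a a' \<Longrightarrow> holes_tm e1 e2 n b b' \<Longrightarrow>
    holes_tm e1 e2 n (Check T a b l) (Check T' a' b' l)"
| holes_Active: "holes_ty e1 e2 n T T' \<Longrightarrow> holes_tm e1 e2 (Suc n) a a' \<Longrightarrow> holes_tm e1 e2 n b b' \<Longrightarrow>
    holes_tm e1 e2 n c c' \<Longrightarrow> holes_tm e1 e2 n (Active T a b c l) (Active T' a' b' c' l)"
| holes_Blame: "holes_tm e1 e2 n (Blame l) (Blame l)"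

lemma holes_refl:
  fixes T :: "('b,'k,'o) ty" and e :: "('b,'k,'o) tm"
  shows "holes_ty e1 e2 n T T" and "holes_tm e1 e2 n e e"
  by (induct T and e arbitrary: n and n rule: ty.induct tm.induct)
     (auto intro: holes_ty_holes_tm.intros list.rel_refl_strong)

lemma holes_subst_same:
  fixes T :: "('b,'k,'o) ty" and e :: "('b,'k,'o) tm"
  shows "holes_ty e1 e2 n (subst_ty n e1 T) (subst_ty n e2 T)"
    and "holes_tm e1 e2 n (subst_tm n e1 e) (subst_tm n e2 e)"
  by (induct T and e arbitrary: n and n rule: ty.induct tm.induct)
     (auto intro!: holes_ty_holes_tm.intros list.rel_refl_strong simp: list.rel_map)

lemma holes_shift:
  shows "holes_ty e1 e2 n T T' \<Longrightarrow> c \<le> n \<Longrightarrow> holes_ty e1 e2 (n + d) (shift_ty d c T) (shift_ty d c T')"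
    and "holes_tm e1 e2 n a a' \<Longrightarrow> c \<le> n \<Longrightarrow> holes_tm e1 e2 (n + d) (shift_tm d c a) (shift_tm d c a')"
proof (induct arbitrary: c and c rule: holes_ty_holes_tm.inducts)
  case (holes_hole n)
  then show ?case
    using shift_shift(2)[of 0 c n d e1] shift_shift(2)[of 0 c n d e2]
    by (simp add: add.commute) (rule holes_ty_holes_tm.holes_hole)
next
  case (holes_Op n es es' p)
  then show ?case
    by (auto intro!: holes_ty_holes_tm.intros simp: list.rel_map elim!: list.rel_mono_strong)
qed (auto intro!: holes_ty_holes_tm.intros)

lemma holes_shift_Suc:
  shows "holes_ty e1 e2 n T T' \<Longrightarrow> c \<le> n \<Longrightarrow>
      holes_ty e1 e2 (Suc n) (shift_ty (Suc 0) c T) (shift_ty (Suc 0) c T')"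
    and "holes_tm e1 e2 n a a' \<Longrightarrow> c \<le> n \<Longrightarrow>
      holes_tm e1 e2 (Suc n) (shift_tm (Suc 0) c a) (shift_tm (Suc 0) c a')"
  using holes_shift[where d = "Suc 0"] by simp_all

lemma holes_subst:
  shows "holes_ty e1 e2 (Suc k) T T' \<Longrightarrow> holes_tm e1 e2 0 s s' \<Longrightarrow>
      holes_ty e1 e2 k (subst_ty k s T) (subst_ty k s' T')"
    and "holes_tm e1 e2 (Suc k) a a' \<Longrightarrow> holes_tm e1 e2 0 s s' \<Longrightarrow>
      holes_tm e1 e2 k (subst_tm k s a) (subst_tm k s' a')"
proof (induct "Suc k" T T' and "Suc k" a a' arbitrary: k and k rule: holes_ty_holes_tm.inducts)
  case holes_hole
  then show ?case
    using subst_shift(2)[of 0 k k s e1] subst_shift(2)[of 0 k k s' e2] by simp (rule holes_ty_holes_tm.holes_hole)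
next
  case (holes_Var x)
  then show ?case using holes_shift(2)[of e1 e2 0 s s' 0 k] by (auto intro: holes_ty_holes_tm.intros)
next
  case (holes_Op es es' p)
  then show ?case
    by (auto intro!: holes_ty_holes_tm.intros simp: list.rel_map elim!: list.rel_mono_strong)
qed (auto intro!: holes_ty_holes_tm.intros)

lemma holes_tsubst:
  shows "holes_ty e1 e2 (Suc k) T T' \<Longrightarrow> holes_ty e1 e2 0 S S' \<Longrightarrow>
      holes_ty e1 e2 k (tsubst_ty k S T) (tsubst_ty k S' T')"
    and "holes_tm e1 e2 (Suc k) a a' \<Longrightarrow> holes_ty e1 e2 0 S S' \<Longrightarrow>
      holes_tm e1 e2 k (tsubst_tm k S a) (tsubst_tm k S' a')"
proof (induct "Suc k" T T' and "Suc k" a a' arbitrary: k and k rule: holes_ty_holes_tm.inducts)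
  case holes_hole
  then show ?case
    using tsubst_shift(2)[of 0 k k S e1] tsubst_shift(2)[of 0 k k S' e2] by simp (rule holes_ty_holes_tm.holes_hole)
next
  case (holes_TVar x)
  then show ?case using holes_shift(1)[of e1 e2 0 S S' 0 k] by (auto intro: holes_ty_holes_tm.intros)
next
  case (holes_Op es es' p)
  then show ?case
    by (auto intro!: holes_ty_holes_tm.intros simp: list.rel_map elim!: list.rel_mono_strong)
qed (auto intro!: holes_ty_holes_tm.intros)

lemma holes_ty_is_ref: "holes_ty e1 e2 n T T' \<Longrightarrow> is_ref T' = is_ref T"
  by (cases rule: holes_ty.cases) auto

inductive_cases holes_App_leftE: "holes_tm e1 e2 n (App x y) b"
inductive_cases holes_TApp_leftE: "holes_tm e1 e2 n (TApp x T) b"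
inductive_cases holes_Op_leftE: "holes_tm e1 e2 n (Op p es) b"
inductive_cases holes_Check_leftE: "holes_tm e1 e2 n (Check T x y l) b"
inductive_cases holes_Active_leftE: "holes_tm e1 e2 n (Active T x y z l) b"
inductive_cases holes_Lam_leftE: "holes_tm e1 e2 n (Lam T x) b"
inductive_cases holes_TLam_leftE: "holes_tm e1 e2 n (TLam x) b"
inductive_cases holes_Cast_leftE: "holes_tm e1 e2 n (Cast T1 T2 l) b"
inductive_cases holes_Const_leftE: "holes_tm e1 e2 n (Const c) b"
inductive_cases holes_TBase_leftE: "holes_ty e1 e2 n (TBase B) T"
inductive_cases holes_TFun_leftE: "holes_ty e1 e2 n (TFun A B) T"
inductive_cases holes_TAll_leftE: "holes_ty e1 e2 n (TAll A) T"
inductive_cases holes_TRef_leftE: "holes_ty e1 e2 n (TRef A e) T"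

inductive_cases holes_App_rightE: "holes_tm e1 e2 n a (App x y)"
inductive_cases holes_TApp_rightE: "holes_tm e1 e2 n a (TApp x T)"
inductive_cases holes_Op_rightE: "holes_tm e1 e2 n a (Op p es)"
inductive_cases holes_Check_rightE: "holes_tm e1 e2 n a (Check T x y l)"
inductive_cases holes_Active_rightE: "holes_tm e1 e2 n a (Active T x y z l)"
inductive_cases holes_Lam_rightE: "holes_tm e1 e2 n a (Lam T x)"
inductive_cases holes_TLam_rightE: "holes_tm e1 e2 n a (TLam x)"
inductive_cases holes_Cast_rightE: "holes_tm e1 e2 n a (Cast T1 T2 l)"
inductive_cases holes_Const_rightE: "holes_tm e1 e2 n a (Const c)"
inductive_cases holes_TBase_rightE: "holes_ty e1 e2 n T (TBase B)"
inductive_cases holes_TFun_rightE: "holes_ty e1 e2 n T (TFun A B)"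
inductive_cases holes_TAll_rightE: "holes_ty e1 e2 n T (TAll A)"
inductive_cases holes_TRef_rightE: "holes_ty e1 e2 n T (TRef A e)"

section \<open>Cotermination\<close>

locale step_pair =
  fixes L :: "('b,'k,'o,'x) fh_sig_scheme" and e1 e2 :: "('b,'k,'o) tm"
  assumes tt_ne_ff: "tt L \<noteq> ff L" and step_e1_e2: "step L e1 e2"
begin

lemma e1_not_val [simp]: "\<not> is_val e1"
  using step_cstep_or_blame[OF step_e1_e2] plug_blame_stuck cstep_not_val by blast

lemma cstep_from_e1: "cstep L e1 a \<Longrightarrow> a = e2"
  using step_cstep_or_blame[OF step_e1_e2] plug_blame_stuck cstep_deterministic[OF tt_ne_ff] by blast

lemma cstep_e1_e2: "(\<And>l. e2 \<noteq> Blame l) \<Longrightarrow> cstep L e1 e2"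
  using step_cstep_or_blame[OF step_e1_e2] by blast

lemma hole_cstep:
  "a = shift_tm 0 0 e1 \<Longrightarrow> b = shift_tm 0 0 e2 \<Longrightarrow> (\<And>l. b \<noteq> Blame l) \<Longrightarrow> cstep L a b"
  using cstep_e1_e2 by (simp add: shift_zero)

lemma val_neq_e1 [simp]:
  assumes "is_val x"
  shows "x \<noteq> e1" "e1 \<noteq> x" "x \<noteq> shift_tm n 0 e1" "shift_tm n 0 e1 \<noteq> x"
  using assms e1_not_val is_val_shift_tm by metis+

lemma holes_val: "holes_tm e1 e2 n a b \<Longrightarrow> is_val a \<Longrightarrow> is_val b"
  by (cases rule: holes_tm.cases) auto

lemma holes_val_right:
  "holes_tm e1 e2 n a b \<Longrightarrow> is_val b \<Longrightarrow> is_val a \<or> (a = shift_tm n 0 e1 \<and> b = shift_tm n 0 e2)"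
  by (cases rule: holes_tm.cases) auto

lemma holes_Consts_left: "list_all2 (holes_tm e1 e2 n) (map Const ks) es \<Longrightarrow> es = map Const ks"
  by (induct ks arbitrary: es) (auto simp: list_all2_Cons1 elim: holes_Const_leftE)

lemma holes_Consts_right:
  "list_all2 (holes_tm e1 e2 n) as (map Const ks) \<Longrightarrow> \<forall>v \<in> set as. is_val v \<Longrightarrow> as = map Const ks"
  by (induct ks arbitrary: as) (auto simp: list_all2_Cons2 elim: holes_Const_rightE)

lemma Cast_redex_sim_fwd:
  assumes "red L (App (Cast T1 T2 l) v) a'"
    and "holes_ty e1 e2 0 T1 S1" "holes_ty e1 e2 0 T2 S2" "holes_tm e1 e2 0 v v'"
  shows "\<exists>b'. red L (App (Cast S1 S2 l) v') b' \<and> holes_tm e1 e2 0 a' b'"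
proof -
  have "is_val v'" using assms(1,4) red_subterms_val(1) holes_val by blast
  from assms(1) show ?thesis
  proof (cases rule: red_Cast_AppE)
    case (cast_base B)
    with assms(2-4) \<open>is_val v'\<close> show ?thesis by (auto elim!: holes_TBase_leftE intro!: exI red.intros)
  next
    case (cast_fun T11 T12 T21 T22)
    with assms(2,3) obtain U11 U12 U21 U22 where S: "S1 = TFun U11 U12" "S2 = TFun U21 U22"
      and h: "holes_ty e1 e2 0 T11 U11" "holes_ty e1 e2 (Suc 0) T12 U12"
        "holes_ty e1 e2 0 T21 U21" "holes_ty e1 e2 (Suc 0) T22 U22"
      by (auto elim!: holes_TFun_leftE)
    have "holes_tm e1 e2 (Suc (Suc 0)) (shift_tm 2 0 v) (shift_tm 2 0 v')"
      using holes_shift(2)[OF assms(4), of 0 2] by (simp add: numeral_2_eq_2)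
    with h assms(4) have "holes_tm e1 e2 0 a'
      (Lam U21 (App (Lam (shift_ty 1 0 U11)
                      (App (Cast (shift_ty 1 1 U12) (shift_ty 1 0 U22) l) (App (shift_tm 2 0 v') (Var 0))))
                   (App (Cast (shift_ty 1 0 U21) (shift_ty 1 0 U11) l) (Var 0))))"
      unfolding cast_fun One_nat_def by (intro holes_ty_holes_tm.intros holes_shift_Suc; simp)
    with S cast_fun \<open>is_val v'\<close> show ?thesis by (auto intro!: exI red.intros)
  next
    case (cast_forall T1' T2')
    with assms(2,3) obtain U1 U2 where S: "S1 = TAll U1" "S2 = TAll U2"
      and h: "holes_ty e1 e2 (Suc 0) T1' U1" "holes_ty e1 e2 (Suc 0) T2' U2"
      by (auto elim!: holes_TAll_leftE)
    with assms(4) have "holes_tm e1 e2 0 a' (TLam (App (Cast U1 U2 l) (TApp (shift_tm 1 0 v') (TVar 0))))"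
      unfolding cast_forall One_nat_def by (intro holes_ty_holes_tm.intros holes_shift_Suc; simp)
    with S cast_forall \<open>is_val v'\<close> show ?thesis by (auto intro!: exI red.intros)
  next
    case (cast_forget T1' e)
    with assms(2) obtain T' e' where "S1 = TRef T' e'" "holes_ty e1 e2 0 T1' T'"
      by (auto elim!: holes_TRef_leftE)
    with cast_forget assms(3,4) \<open>is_val v'\<close> show ?thesis
      by (intro exI[of _ "App (Cast T' S2 l) v'"]) (auto intro: red.intros holes_ty_holes_tm.intros)
  next
    case (cast_precheck T2' e)
    with assms(3) obtain U2 f where "S2 = TRef U2 f" "holes_ty e1 e2 0 T2' U2" "holes_tm e1 e2 (Suc 0) e f"
      by (auto elim!: holes_TRef_leftE)
    moreover from assms(2) cast_precheck have "\<not> is_ref S1" by (simp add: holes_ty_is_ref)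
    ultimately show ?thesis using cast_precheck assms(2,4) \<open>is_val v'\<close>
      by (intro exI[of _ "Check U2 f (App (Cast S1 U2 l) v') l"])
         (auto intro: red.intros holes_ty_holes_tm.intros)
  qed
qed

lemma redex_sim_fwd:
  assumes "red L a a'" "holes_tm e1 e2 0 a b" "\<not> (a = e1 \<and> b = e2)"
  shows "\<exists>b'. red L b b' \<and> holes_tm e1 e2 0 a' b'"
  using assms(1)
proof cases
  case (red_op p ks k)
  with assms(2,3) have "b = a"
    by (auto simp: shift_zero elim!: holes_Op_leftE dest: holes_Consts_left)
  with assms(1) show ?thesis by (auto intro: holes_refl)
next
  case (red_beta v T e)
  with assms(2,3) obtain T' e' v' where "b = App (Lam T' e') v'"
    "holes_tm e1 e2 (Suc 0) e e'" "holes_tm e1 e2 0 v v'"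
    by (auto simp: shift_zero elim!: holes_App_leftE holes_Lam_leftE)
  with red_beta show ?thesis by (auto intro!: exI red.intros holes_subst dest: holes_val)
next
  case (red_tbeta e T)
  with assms(2,3) obtain e' T' where "b = TApp (TLam e') T'"
    "holes_tm e1 e2 (Suc 0) e e'" "holes_ty e1 e2 0 T T'"
    by (auto simp: shift_zero elim!: holes_TApp_leftE holes_TLam_leftE)
  with red_tbeta show ?thesis by (auto intro!: exI red.intros holes_tsubst)
next
  case (red_check v T e l)
  with assms(2,3) obtain T' e' v' where "b = Check T' e' v' l"
    "holes_ty e1 e2 0 T T'" "holes_tm e1 e2 (Suc 0) e e'" "holes_tm e1 e2 0 v v'"
    by (auto simp: shift_zero elim!: holes_Check_leftE)
  with red_check show ?thesis
    by (auto intro!: exI red.intros holes_ty_holes_tm.intros holes_subst dest: holes_val)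
next
  case (red_ok T e l)
  with assms(2,3) obtain T' e' v' where "b = Active T' e' (Const (tt L)) v' l" "holes_tm e1 e2 0 a' v'"
    by (auto simp: shift_zero elim!: holes_Active_leftE holes_Const_leftE)
  with red_ok show ?thesis by (auto intro!: exI red.intros dest: holes_val)
next
  case (red_fail v T e l)
  with assms(2,3) obtain T' e' v' where "b = Active T' e' (Const (ff L)) v' l" "holes_tm e1 e2 0 v v'"
    by (auto simp: shift_zero elim!: holes_Active_leftE holes_Const_leftE)
  with red_fail show ?thesis
    by (auto intro!: exI red.intros holes_ty_holes_tm.intros dest: holes_val)
qed (use assms in \<open>auto simp: shift_zero elim!: holes_App_leftE holes_Cast_leftE
      intro: Cast_redex_sim_fwd\<close>)

(* At a hole, a reduces e1 to e2, which b already contains, so b need not move. *)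

lemma hole_sim_fwd:
  "a = shift_tm 0 0 e1 \<Longrightarrow> b = shift_tm 0 0 e2 \<Longrightarrow> cstep L a a' \<Longrightarrow>
    \<exists>b'. (b' = b \<or> cstep L b b') \<and> holes_tm e1 e2 0 a' b'"
  using cstep_from_e1[of a'] holes_refl(2)[of e1 e2 0 e2] by (auto simp: shift_zero)

lemma red_sim_fwd:
  assumes "red L a a'" "holes_tm e1 e2 0 a b"
  shows "\<exists>b'. (b' = b \<or> cstep L b b') \<and> holes_tm e1 e2 0 a' b'"
proof (cases "a = e1 \<and> b = e2")
  case True
  with assms(1) show ?thesis by (intro hole_sim_fwd) (auto simp: shift_zero intro: cstep_red)
qed (use redex_sim_fwd[OF assms] cstep_red in blast)

lemma cstep_sim_fwd:
  "cstep L a a' \<Longrightarrow> holes_tm e1 e2 0 a b \<Longrightarrow> \<exists>b'. (b' = b \<or> cstep L b b') \<and> holes_tm e1 e2 0 a' b'"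
proof (induct arbitrary: b rule: cstep.induct)
  case (cstep_red a a')
  then show ?case by (rule red_sim_fwd)
next
  case (cstep_app1 x x' y)
  from cstep_app1(3) show ?case
  proof (rule holes_App_leftE)
    fix bx yb assume "b = App bx yb" "holes_tm e1 e2 0 x bx" "holes_tm e1 e2 0 y yb"
    with cstep_app1(2) show ?case by (blast intro: cstep.cstep_app1 holes_App)
  qed (use cstep_app1 in \<open>blast intro: hole_sim_fwd cstep.intros\<close>)
next
  case (cstep_app2 v y y')
  from cstep_app2(4) show ?case
  proof (rule holes_App_leftE)
    fix bv yb assume "b = App bv yb" "holes_tm e1 e2 0 v bv" "holes_tm e1 e2 0 y yb"
    with cstep_app2(1,3) show ?case by (blast intro: cstep.cstep_app2 holes_App dest: holes_val)
  qed (use cstep_app2 in \<open>blast intro: hole_sim_fwd cstep.intros\<close>)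
next
  case (cstep_tapp x x' T)
  from cstep_tapp(3) show ?case
  proof (rule holes_TApp_leftE)
    fix bx T' assume "b = TApp bx T'" "holes_tm e1 e2 0 x bx" "holes_ty e1 e2 0 T T'"
    with cstep_tapp(2) show ?case by (blast intro: cstep.cstep_tapp holes_TApp)
  qed (use cstep_tapp in \<open>blast intro: hole_sim_fwd cstep.intros\<close>)
next
  case (cstep_op vs x x' p es)
  from cstep_op(4) show ?case
  proof (rule holes_Op_leftE)
    fix bs assume "b = Op p bs" "list_all2 (holes_tm e1 e2 0) (vs @ x # es) bs"
    then obtain bvs bx bes where b: "b = Op p (bvs @ bx # bes)" "list_all2 (holes_tm e1 e2 0) vs bvs"
      "holes_tm e1 e2 0 x bx" "list_all2 (holes_tm e1 e2 0) es bes"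
      by (auto simp: list_all2_append1 list_all2_Cons1)
    from b(2) cstep_op(1) have "\<forall>v \<in> set bvs. is_val v"
      by (induct vs bvs rule: list_all2_induct) (auto dest: holes_val)
    with b cstep_op(3) show ?case
      by (blast intro: cstep.cstep_op holes_Op list_all2_appendI list_all2_Cons[THEN iffD2])
  qed (use cstep_op in \<open>blast intro: hole_sim_fwd cstep.intros\<close>)
next
  case (cstep_check x x' T e l)
  from cstep_check(3) show ?case
  proof (rule holes_Check_leftE)
    fix T' e' bx assume "b = Check T' e' bx l" "holes_ty e1 e2 0 T T'" "holes_tm e1 e2 (Suc 0) e e'"
      "holes_tm e1 e2 0 x bx"
    with cstep_check(2) show ?case by (blast intro: cstep.cstep_check holes_Check)
  qed (use cstep_check in \<open>blast intro: hole_sim_fwd cstep.intros\<close>)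
next
  case (cstep_active v x x' T e l)
  from cstep_active(4) show ?case
  proof (rule holes_Active_leftE)
    fix T' e' bx bv assume "b = Active T' e' bx bv l" "holes_ty e1 e2 0 T T'"
      "holes_tm e1 e2 (Suc 0) e e'" "holes_tm e1 e2 0 x bx" "holes_tm e1 e2 0 v bv"
    with cstep_active(1,3) show ?case by (blast intro: cstep.cstep_active holes_Active dest: holes_val)
  qed (use cstep_active in \<open>blast intro: hole_sim_fwd cstep.intros\<close>)
next
  case (cstep_active_val v v' T e x l)
  from cstep_active_val(3) show ?case
  proof (rule holes_Active_leftE)
    fix T' e' bx bv assume "b = Active T' e' bx bv l" "holes_ty e1 e2 0 T T'"
      "holes_tm e1 e2 (Suc 0) e e'" "holes_tm e1 e2 0 x bx" "holes_tm e1 e2 0 v bv"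
    with cstep_active_val(2) show ?case by (blast intro: cstep.cstep_active_val holes_Active)
  qed (use cstep_active_val in \<open>blast intro: hole_sim_fwd cstep.intros\<close>)
qed

lemma holes_csteps_Const_fwd:
  "csteps L a (Const k) \<Longrightarrow> holes_tm e1 e2 0 a b \<Longrightarrow> csteps L b (Const k)"
proof (induct arbitrary: b rule: converse_rtranclp_induct)
  case base
  then show ?case by (auto elim: holes_Const_leftE)
next
  case (step a a')
  then obtain b' where "b' = b \<or> cstep L b b'" "holes_tm e1 e2 0 a' b'"
    using cstep_sim_fwd by blast
  with step(3) show ?case by (auto intro: converse_rtranclp_into_rtranclp)
qed

lemma val_sim_bwd:
  assumes "holes_tm e1 e2 0 a b" "is_val b"
  shows "\<exists>a'. csteps L a a' \<and> is_val a' \<and> holes_tm e1 e2 0 a' b"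
proof (cases "is_val a")
  case False
  with assms have "a = shift_tm 0 0 e1" "b = shift_tm 0 0 e2" using holes_val_right by blast+
  with assms(2) have "cstep L a b" by (intro hole_cstep) (auto simp: shift_zero)
  with assms(2) show ?thesis by (blast intro: holes_refl)
qed (use assms in blast)

lemma App_sim_bwd:
  assumes "holes_tm e1 e2 0 a (App f v)" "is_val f" "is_val v"
  shows "\<exists>f' v'. csteps L a (App f' v') \<and> is_val f' \<and> is_val v' \<and>
    holes_tm e1 e2 0 f' f \<and> holes_tm e1 e2 0 v' v"
  using assms(1)
proof (rule holes_App_rightE)
  fix x y assume "a = App x y" "holes_tm e1 e2 0 x f" "holes_tm e1 e2 0 y v"
  with assms(2,3) show ?thesis by (meson val_sim_bwd csteps_App)
qed (use assms in \<open>blast intro: hole_cstep holes_refl\<close>)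

lemma TApp_sim_bwd:
  assumes "holes_tm e1 e2 0 a (TApp f T)" "is_val f"
  shows "\<exists>f' T'. csteps L a (TApp f' T') \<and> is_val f' \<and> holes_tm e1 e2 0 f' f \<and> holes_ty e1 e2 0 T' T"
  using assms(1)
proof (rule holes_TApp_rightE)
  fix x T' assume "a = TApp x T'" "holes_tm e1 e2 0 x f" "holes_ty e1 e2 0 T' T"
  with assms(2) show ?thesis by (meson val_sim_bwd csteps_TApp)
qed (use assms in \<open>blast intro: hole_cstep holes_refl\<close>)

lemma Check_sim_bwd:
  assumes "holes_tm e1 e2 0 a (Check T e v l)" "is_val v"
  shows "\<exists>T' e' v'. csteps L a (Check T' e' v' l) \<and> is_val v' \<and>
    holes_ty e1 e2 0 T' T \<and> holes_tm e1 e2 (Suc 0) e' e \<and> holes_tm e1 e2 0 v' v"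
  using assms(1)
proof (rule holes_Check_rightE)
  fix T' e' x assume "a = Check T' e' x l" "holes_ty e1 e2 0 T' T" "holes_tm e1 e2 (Suc 0) e' e"
    "holes_tm e1 e2 0 x v"
  with assms(2) show ?thesis by (meson val_sim_bwd csteps_Check)
qed (use assms in \<open>blast intro: hole_cstep holes_refl\<close>)

lemma Active_sim_bwd:
  assumes "holes_tm e1 e2 0 a (Active T e c v l)" "is_val c" "is_val v"
  shows "\<exists>T' e' c' v'. csteps L a (Active T' e' c' v' l) \<and> is_val c' \<and> is_val v' \<and>
    holes_ty e1 e2 0 T' T \<and> holes_tm e1 e2 (Suc 0) e' e \<and> holes_tm e1 e2 0 c' c \<and> holes_tm e1 e2 0 v' v"
  using assms(1)
proof (rule holes_Active_rightE)
  fix T' e' x y assume "a = Active T' e' x y l" "holes_ty e1 e2 0 T' T" "holes_tm e1 e2 (Suc 0) e' e"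
    "holes_tm e1 e2 0 x c" "holes_tm e1 e2 0 y v"
  with assms(2,3) show ?thesis by (meson val_sim_bwd csteps_Active)
qed (use assms in \<open>blast intro: hole_cstep holes_refl\<close>)

lemma Op_vals_sim_bwd:
  "list_all2 (holes_tm e1 e2 0) as bs \<Longrightarrow> \<forall>v \<in> set bs. is_val v \<Longrightarrow> \<forall>v \<in> set vs. is_val v \<Longrightarrow>
    \<exists>as'. csteps L (Op p (vs @ as @ es)) (Op p (vs @ as' @ es)) \<and>
      (\<forall>v \<in> set as'. is_val v) \<and> list_all2 (holes_tm e1 e2 0) as' bs"
proof (induct as bs arbitrary: vs rule: list_all2_induct)
  case (Cons x as b bs)
  then obtain x' where x': "csteps L x x'" "is_val x'" "holes_tm e1 e2 0 x' b"
    using val_sim_bwd[OF Cons(1)] Cons(4) by auto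
  then have "csteps L (Op p (vs @ x # as @ es)) (Op p (vs @ x' # as @ es))"
    using rtranclp_map[of "cstep L" "cstep L" "\<lambda>z. Op p (vs @ z # as @ es)", OF cstep_op]
      Cons(5) by blast
  moreover obtain as' where "csteps L (Op p ((vs @ [x']) @ as @ es)) (Op p ((vs @ [x']) @ as' @ es))"
    "\<forall>v \<in> set as'. is_val v" "list_all2 (holes_tm e1 e2 0) as' bs"
    using Cons(3)[of "vs @ [x']"] Cons(4,5) x'(2) by auto
  ultimately show ?case using x' by (intro exI[of _ "x' # as'"]) auto
qed auto

lemma Op_sim_bwd:
  assumes "holes_tm e1 e2 0 a (Op p (map Const ks))"
  shows "csteps L a (Op p (map Const ks))"
  using assms
proof (rule holes_Op_rightE)
  assume "a = shift_tm 0 0 e1" "Op p (map Const ks) = shift_tm 0 0 e2"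
  then show ?thesis by (intro r_into_rtranclp hole_cstep) auto
next
  fix as assume a: "a = Op p as" "list_all2 (holes_tm e1 e2 0) as (map Const ks)"
  then obtain as' where "csteps L a (Op p as')" "\<forall>v \<in> set as'. is_val v"
    "list_all2 (holes_tm e1 e2 0) as' (map Const ks)"
    using Op_vals_sim_bwd[OF a(2), where vs = "[]" and es = "[]" and p = p] by auto
  then show ?thesis by (auto dest: holes_Consts_right)
qed

lemma Cast_redex_sim_bwd:
  assumes "red L (App (Cast T1 T2 l) v) b'" "holes_tm e1 e2 0 a (App (Cast T1 T2 l) v)"
  shows "\<exists>a0 a0'. csteps L a a0 \<and> holes_tm e1 e2 0 a0 (App (Cast T1 T2 l) v) \<and> red L a0 a0'"
proof -
  from assms(1) have "is_val v" by (auto dest: red_subterms_val)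
  with App_sim_bwd[OF assms(2)] obtain f' v' where a: "csteps L a (App f' v')" "is_val v'"
    "holes_tm e1 e2 0 f' (Cast T1 T2 l)" "holes_tm e1 e2 0 v' v" "is_val f'"
    by auto
  from a(3,5) obtain S1 S2 where S: "f' = Cast S1 S2 l" "holes_ty e1 e2 0 S1 T1" "holes_ty e1 e2 0 S2 T2"
    by (auto elim!: holes_Cast_rightE)
  from assms(1) have "\<exists>a0'. red L (App (Cast S1 S2 l) v') a0'"
    by (cases rule: red_Cast_AppE)
       (use S(2,3) a(2) in \<open>auto elim!: holes_TBase_rightE holes_TFun_rightE holes_TAll_rightE
         holes_TRef_rightE intro: red.intros simp: holes_ty_is_ref\<close>)
  with a S show ?thesis by (blast intro: holes_App holes_Cast)
qed

lemma redex_sim_bwd: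
  assumes "red L b b'" "holes_tm e1 e2 0 a b"
  shows "\<exists>a0 a0'. csteps L a a0 \<and> holes_tm e1 e2 0 a0 b \<and> red L a0 a0'"
  using assms(1)
proof cases
  case (red_op p ks k)
  with assms show ?thesis by (blast intro: Op_sim_bwd holes_refl)
next
  case (red_beta v T e)
  with App_sim_bwd[of a "Lam T e" v] assms(2) obtain f' v' where
    "csteps L a (App f' v')" "is_val v'" "holes_tm e1 e2 0 f' (Lam T e)" "holes_tm e1 e2 0 v' v"
    "is_val f'" by auto
  with red_beta show ?thesis
    by (elim holes_Lam_rightE) (auto intro: holes_ty_holes_tm.intros red.intros)
next
  case (red_tbeta e T)
  with TApp_sim_bwd[of a "TLam e" T] assms(2) obtain f' T' where
    "csteps L a (TApp f' T')" "holes_tm e1 e2 0 f' (TLam e)" "holes_ty e1 e2 0 T' T" "is_val f'"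
    by auto
  with red_tbeta show ?thesis
    by (elim holes_TLam_rightE) (auto intro: holes_ty_holes_tm.intros red.intros)
next
  case (red_check v T e l)
  with Check_sim_bwd[of a T e v l] assms(2) obtain T' e' v' where
    "csteps L a (Check T' e' v' l)" "is_val v'" "holes_ty e1 e2 0 T' T"
    "holes_tm e1 e2 (Suc 0) e' e" "holes_tm e1 e2 0 v' v" by auto
  with red_check show ?thesis by (auto intro: holes_ty_holes_tm.intros red.intros)
next
  case (red_ok T e l)
  with Active_sim_bwd[of a T e "Const (tt L)" b' l] assms(2) obtain T' e' c' v' where
    "csteps L a (Active T' e' c' v' l)" "is_val c'" "is_val v'" "holes_ty e1 e2 0 T' T"
    "holes_tm e1 e2 (Suc 0) e' e" "holes_tm e1 e2 0 c' (Const (tt L))" "holes_tm e1 e2 0 v' b'"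
    by auto
  with red_ok show ?thesis
    by (elim holes_Const_rightE) (auto intro: holes_ty_holes_tm.intros red.intros)
next
  case (red_fail v T e l)
  with Active_sim_bwd[of a T e "Const (ff L)" v l] assms(2) obtain T' e' c' v' where
    "csteps L a (Active T' e' c' v' l)" "is_val c'" "is_val v'" "holes_ty e1 e2 0 T' T"
    "holes_tm e1 e2 (Suc 0) e' e" "holes_tm e1 e2 0 c' (Const (ff L))" "holes_tm e1 e2 0 v' v"
    by auto
  with red_fail show ?thesis
    by (elim holes_Const_rightE) (auto intro: holes_ty_holes_tm.intros red.intros)
qed (use assms in \<open>blast dest: Cast_redex_sim_bwd\<close>)+

(* First a evaluates its holes in the value positions of the redex b (redex_sim_bwd); the
   redex reached then reduces in step with b by the forward simulation and determinism. *)

lemma red_sim_bwd: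
  assumes "red L b b'" "holes_tm e1 e2 0 a b"
  shows "\<exists>a'. csteps L a a' \<and> holes_tm e1 e2 0 a' b'"
proof -
  obtain a0 a0' where a0: "csteps L a a0" "holes_tm e1 e2 0 a0 b" "red L a0 a0'"
    using redex_sim_bwd[OF assms] by blast
  show ?thesis
  proof (cases "a0 = e1 \<and> b = e2")
    case True
    with assms(1) have "cstep L e1 e2" by (intro cstep_e1_e2) (auto elim: red.cases)
    with True a0(1) assms(1) have "csteps L a b'"
      by (meson cstep_red rtranclp.rtrancl_into_rtrancl)
    then show ?thesis by (blast intro: holes_refl)
  next
    case False
    then obtain b'' where "red L b b''" "holes_tm e1 e2 0 a0' b''"
      using redex_sim_fwd[OF a0(3,2)] by blast
    with assms(1) a0 show ?thesis
      by (metis red_deterministic[OF tt_ne_ff] cstep_red rtranclp.rtrancl_into_rtrancl)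
  qed
qed

lemma hole_sim_bwd:
  assumes "a = shift_tm 0 0 e1" "b = shift_tm 0 0 e2" "cstep L b b'"
  shows "\<exists>a'. csteps L a a' \<and> holes_tm e1 e2 0 a' b'"
proof -
  have "b \<noteq> Blame l" for l
    using assms(3) plug_blame_stuck[of "[]"] by auto
  with assms(1,2) have "cstep L a b" by (rule hole_cstep)
  with assms(3) have "csteps L a b'" by auto
  then show ?thesis using holes_refl by blast
qed

lemma cstep_sim_bwd:
  "cstep L b b' \<Longrightarrow> holes_tm e1 e2 0 a b \<Longrightarrow> \<exists>a'. csteps L a a' \<and> holes_tm e1 e2 0 a' b'"
proof (induct arbitrary: a rule: cstep.induct)
  case (cstep_red b b')
  then show ?case by (rule red_sim_bwd)
next
  case (cstep_app1 x x' y)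
  from cstep_app1(3) show ?case
  proof (rule holes_App_rightE)
    fix ax ay assume "a = App ax ay" "holes_tm e1 e2 0 ax x" "holes_tm e1 e2 0 ay y"
    with cstep_app1(2) show ?case
      using rtranclp_map[of "cstep L" "cstep L" "\<lambda>z. App z ay", OF cstep.cstep_app1]
      by (blast intro: holes_App)
  qed (use cstep_app1 in \<open>blast intro: hole_sim_bwd cstep.intros\<close>)
next
  case (cstep_app2 v y y')
  from cstep_app2(4) show ?case
  proof (rule holes_App_rightE)
    fix av ay assume "a = App av ay" "holes_tm e1 e2 0 av v" "holes_tm e1 e2 0 ay y"
    with cstep_app2(1,3) show ?case by (meson val_sim_bwd csteps_App holes_App)
  qed (use cstep_app2 in \<open>blast intro: hole_sim_bwd cstep.intros\<close>)
next
  case (cstep_tapp x x' T)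
  from cstep_tapp(3) show ?case
  proof (rule holes_TApp_rightE)
    fix ax T' assume "a = TApp ax T'" "holes_tm e1 e2 0 ax x" "holes_ty e1 e2 0 T' T"
    with cstep_tapp(2) show ?case by (meson csteps_TApp holes_TApp)
  qed (use cstep_tapp in \<open>blast intro: hole_sim_bwd cstep.intros\<close>)
next
  case (cstep_op vs x x' p es)
  from cstep_op(4) show ?case
  proof (rule holes_Op_rightE)
    fix as assume "a = Op p as" "list_all2 (holes_tm e1 e2 0) as (vs @ x # es)"
    then obtain avs ax aes where a: "a = Op p (avs @ ax # aes)" "list_all2 (holes_tm e1 e2 0) avs vs"
      "holes_tm e1 e2 0 ax x" "list_all2 (holes_tm e1 e2 0) aes es"
      by (auto simp: list_all2_append2 list_all2_Cons2)
    obtain avs' where avs': "csteps L a (Op p (avs' @ ax # aes))" "\<forall>v \<in> set avs'. is_val v"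
      "list_all2 (holes_tm e1 e2 0) avs' vs"
      using Op_vals_sim_bwd[OF a(2) cstep_op(1), where vs = "[]" and es = "ax # aes" and p = p] a(1)
      by auto
    obtain ax' where ax': "csteps L ax ax'" "holes_tm e1 e2 0 ax' x'"
      using cstep_op(3) a(3) by blast
    have "csteps L a (Op p (avs' @ ax' # aes))"
      using rtranclp_map[of "cstep L" "cstep L" "\<lambda>z. Op p (avs' @ z # aes)", OF cstep.cstep_op ax'(1)]
        avs'(1,2) by auto
    moreover have "holes_tm e1 e2 0 (Op p (avs' @ ax' # aes)) (Op p (vs @ x' # es))"
      using avs'(3) ax'(2) a(4) by (intro holes_Op list_all2_appendI list_all2_Cons[THEN iffD2] conjI)
    ultimately show ?case by blast
  qed (use cstep_op in \<open>blast intro: hole_sim_bwd cstep.intros\<close>)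
next
  case (cstep_check x x' T e l)
  from cstep_check(3) show ?case
  proof (rule holes_Check_rightE)
    fix T' e' ax assume "a = Check T' e' ax l" "holes_ty e1 e2 0 T' T" "holes_tm e1 e2 (Suc 0) e' e"
      "holes_tm e1 e2 0 ax x"
    with cstep_check(2) show ?case by (meson csteps_Check holes_Check)
  qed (use cstep_check in \<open>blast intro: hole_sim_bwd cstep.intros\<close>)
next
  case (cstep_active v x x' T e l)
  from cstep_active(4) show ?case
  proof (rule holes_Active_rightE)
    fix T' e' ax av assume "a = Active T' e' ax av l" "holes_ty e1 e2 0 T' T"
      "holes_tm e1 e2 (Suc 0) e' e" "holes_tm e1 e2 0 ax x" "holes_tm e1 e2 0 av v"
    with cstep_active(1,3) show ?case by (meson val_sim_bwd csteps_Active holes_Active)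
  qed (use cstep_active in \<open>blast intro: hole_sim_bwd cstep.intros\<close>)
next
  case (cstep_active_val v v' T e x l)
  from cstep_active_val(3) show ?case
  proof (rule holes_Active_rightE)
    fix T' e' ax av assume "a = Active T' e' ax av l" "holes_ty e1 e2 0 T' T"
      "holes_tm e1 e2 (Suc 0) e' e" "holes_tm e1 e2 0 ax x" "holes_tm e1 e2 0 av v"
    with cstep_active_val(2) show ?case
      using rtranclp_map[of "cstep L" "cstep L" "\<lambda>z. Active T' e' ax z l", OF cstep.cstep_active_val]
      by (blast intro: holes_Active)
  qed (use cstep_active_val in \<open>blast intro: hole_sim_bwd cstep.intros\<close>)
qed

lemma holes_csteps_Const_bwd:
  "csteps L b (Const k) \<Longrightarrow> holes_tm e1 e2 0 a b \<Longrightarrow> csteps L a (Const k)"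
proof (induct arbitrary: a rule: converse_rtranclp_induct)
  case base
  then obtain a' where "csteps L a a'" "is_val a'" "holes_tm e1 e2 0 a' (Const k)"
    using val_sim_bwd by fastforce
  then show ?case by (auto elim: holes_Const_rightE)
next
  case (step b b')
  then obtain a' where "csteps L a a'" "holes_tm e1 e2 0 a' b'"
    using cstep_sim_bwd by blast
  with step(3) show ?case by (auto intro: rtranclp_trans)
qed

lemma holes_csteps_Const_iff:
  "holes_tm e1 e2 0 a b \<Longrightarrow> csteps L a (Const k) \<longleftrightarrow> csteps L b (Const k)"
  using holes_csteps_Const_fwd holes_csteps_Const_bwd by blast

end

section \<open>Values of refinement types\<close>

lemma refines_subst_ty:
  "w \<in> refines (subst_ty k e T) \<longleftrightarrow>
    (\<exists>S r. Lam S r \<in> refines T \<and> w = Lam (subst_ty k e S) (subst_tm (Suc k) e r))"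
  by (induct T rule: refines.induct) auto

lemma Ball_refines_subst_ty:
  "(\<forall>w \<in> refines (subst_ty k e T). P w) \<longleftrightarrow>
    (\<forall>S r. Lam S r \<in> refines T \<longrightarrow> P (Lam (subst_ty k e S) (subst_tm (Suc k) e r)))"
proof
  assume "\<forall>w \<in> refines (subst_ty k e T). P w"
  then show "\<forall>S r. Lam S r \<in> refines T \<longrightarrow> P (Lam (subst_ty k e S) (subst_tm (Suc k) e r))"
    by (metis refines_subst_ty)
qed (auto simp: refines_subst_ty)

lemma refines_active_ok: "w \<in> refines T \<Longrightarrow> active_ok_ty T \<Longrightarrow> active_ok_tm w"
  by (induct T rule: refines.induct) auto

lemma conv1_refines_csteps_iff:
  assumes "tt L \<noteq> ff L" "conv1 L T1 T2"
  shows "(\<forall>w \<in> refines T1. csteps L (App w v) (Const k)) \<longleftrightarrow>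
    (\<forall>w \<in> refines T2. csteps L (App w v) (Const k))"
proof -
  obtain T e1 e2 where T: "T1 = subst_ty 0 e1 T" "T2 = subst_ty 0 e2 T" "step L e1 e2"
    using assms(2) unfolding conv1_def by blast
  interpret step_pair L e1 e2 using assms(1) T(3) by unfold_locales
  have "holes_tm e1 e2 0 (App (Lam (subst_ty 0 e1 S) (subst_tm (Suc 0) e1 r)) v)
                         (App (Lam (subst_ty 0 e2 S) (subst_tm (Suc 0) e2 r)) v)" for S r
    by (intro holes_ty_holes_tm.intros holes_subst_same holes_refl)
  then have "csteps L (App (Lam (subst_ty 0 e1 S) (subst_tm (Suc 0) e1 r)) v) (Const k) \<longleftrightarrow>
      csteps L (App (Lam (subst_ty 0 e2 S) (subst_tm (Suc 0) e2 r)) v) (Const k)" for S r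
    by (rule holes_csteps_Const_iff)
  then show ?thesis unfolding T(1,2) Ball_refines_subst_ty by simp
qed

definition sat_refines :: "('b,'k,'o,'x) fh_sig_scheme \<Rightarrow> ('b,'k,'o) tm \<Rightarrow> ('b,'k,'o) ty \<Rightarrow> bool" where
  "sat_refines L v T \<longleftrightarrow> (\<forall>w \<in> refines T. steps L (App w v) (Const (tt L)))"

lemma sat_refines_tyequiv:
  assumes "tt L \<noteq> ff L" "tyequiv L T1 T2" "active_ok_ty T2" "active_ok_tm v" "sat_refines L v T1"
  shows "sat_refines L v T2"
  unfolding sat_refines_def
proof
  let ?P = "\<lambda>T. \<forall>w \<in> refines T. csteps L (App w v) (Const (tt L))"
  have conv: "?P S \<longleftrightarrow> ?P S'" if "conv1 L S S' \<or> conv1 L S' S" for S S'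
    using that conv1_refines_csteps_iff[OF assms(1), of S S' v] conv1_refines_csteps_iff[OF assms(1), of S' S v]
    by metis
  from assms(2) have "?P T1 \<longleftrightarrow> ?P T2"
    unfolding tyequiv_def
    by (induct rule: tranclp_induct) (simp_all add: conv)
  moreover from assms(5) have "?P T1"
    unfolding sat_refines_def by (blast intro: steps_imp_csteps)
  moreover fix w assume "w \<in> refines T2"
  moreover from this assms(3,4) have "active_ok_tm (App w v)" by (simp add: refines_active_ok)
  ultimately show "steps L (App w v) (Const (tt L))" by (blast intro: csteps_imp_steps)
qed

lemma csteps_Check_Const_inv:
  "csteps L x (Const k) \<Longrightarrow> x = Check T e a l \<Longrightarrow>
    \<exists>v. csteps L a v \<and> is_val v \<and> csteps L (Active T e (subst_tm 0 v e) v l) (Const k)"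
proof (induct arbitrary: a rule: converse_rtranclp_induct)
  case (step x y)
  from step(1) show ?case unfolding step(4)
  proof cases
    case cstep_red
    then show ?thesis using step(2) by (auto elim: red.cases)
  next
    case (cstep_check a')
    with step(3) show ?thesis by (blast intro: converse_rtranclp_into_rtranclp)
  qed
qed simp

lemma csteps_Active_Const_inv:
  "csteps L x (Const k) \<Longrightarrow> x = Active T e c v l \<Longrightarrow> is_val v \<Longrightarrow>
    csteps L c (Const (tt L)) \<and> v = Const k"
proof (induct arbitrary: c rule: converse_rtranclp_induct)
  case (step x y)
  from step(1) show ?case unfolding step(4)
  proof cases
    case cstep_red
    then show ?thesis
    proof cases
      case red_ok
      with step(2,5) show ?thesis by (auto elim: converse_rtranclpE dest: cstep_not_val)
    next
      case red_fail
      with step(2) show ?thesis by (auto dest: Blame_not_csteps_Const)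
    qed
  next
    case (cstep_active c')
    with step(3,5) show ?thesis by (blast intro: converse_rtranclp_into_rtranclp)
  next
    case (cstep_active_val v')
    with step(5) show ?thesis by (auto dest: cstep_not_val)
  qed
qed simp

lemma cast_Const_refines:
  assumes "tt L \<noteq> ff L"
  shows "unref T = TBase B \<Longrightarrow> csteps L (App (Cast (TBase B) T l) (Const k)) (Const k) \<Longrightarrow>
    \<forall>w \<in> refines T. csteps L (App w (Const k)) (Const (tt L))"
proof (induct T rule: refines.induct)
  case (1 T e)
  have "cstep L (App (Cast (TBase B) (TRef T e) l) (Const k)) (Check T e (App (Cast (TBase B) T l) (Const k)) l)"
    by (intro cstep_red red_precheck) auto
  from this 1(3) have check: "csteps L (Check T e (App (Cast (TBase B) T l) (Const k)) l) (Const k)"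
    by (rule cstep_preserves_csteps_Const[OF assms])
  obtain v where v: "csteps L (App (Cast (TBase B) T l) (Const k)) v" "is_val v"
    "csteps L (Active T e (subst_tm 0 v e) v l) (Const k)"
    using csteps_Check_Const_inv[OF check refl] by blast
  with csteps_Active_Const_inv[OF v(3) refl v(2)]
  have "csteps L (subst_tm 0 (Const k) e) (Const (tt L))" "v = Const k" by auto
  moreover have "cstep L (App (Lam T e) (Const k)) (subst_tm 0 (Const k) e)"
    by (intro cstep_red red_beta) simp
  ultimately have "csteps L (App (Lam T e) (Const k)) (Const (tt L))"
    by (simp add: converse_rtranclp_into_rtranclp)
  moreover have "\<forall>w \<in> refines T. csteps L (App w (Const k)) (Const (tt L))"
    using 1(1,2) v(1) \<open>v = Const k\<close> by simp
  ultimately show ?case by simp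
qed auto

lemma fh_sig_ok_tt_ne_ff: "fh_sig_ok L \<Longrightarrow> tt L \<noteq> ff L"
  unfolding fh_sig_ok_def by blast

lemma fh_sig_ok_Const_cast:
  assumes "fh_sig_ok L"
  shows "unref (cty L k) = TBase (cbase L k)" "wfty L [] (cty L k)"
    "steps L (App (Cast (TBase (cbase L k)) (cty L k) l) (Const k)) (Const k)"
  using assms unfolding fh_sig_ok_def by blast+

lemma typing_val_sat_refines:
  shows "wfctx L G \<Longrightarrow> True"
    and "wfty L G T \<Longrightarrow> True"
    and "typing L G e T \<Longrightarrow> fh_sig_ok L \<Longrightarrow> G = [] \<Longrightarrow> is_val e \<Longrightarrow> sat_refines L e T"
proof (induct rule: wfctx_wfty_typing.inducts)
  case (t_const G k)
  have ok: "unref (cty L k) = TBase (cbase L k)" "wfty L [] (cty L k)"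
    "steps L (App (Cast (TBase (cbase L k)) (cty L k) 0) (Const k)) (Const k)"
    using fh_sig_ok_Const_cast[OF t_const.prems(1)] by blast+
  have csteps: "\<forall>w \<in> refines (cty L k). csteps L (App w (Const k)) (Const (tt L))"
    by (rule cast_Const_refines[OF fh_sig_ok_tt_ne_ff ok(1) steps_imp_csteps[OF ok(3)]])
      (use t_const.prems in auto)
  show ?case
    unfolding sat_refines_def
  proof
    fix w assume w: "w \<in> refines (cty L k)"
    with typing_active_ok(2)[OF ok(2)] have "active_ok_tm (App w (Const k))"
      by (simp add: refines_active_ok)
    with w csteps show "steps L (App w (Const k)) (Const (tt L))" by (simp add: csteps_imp_steps)
  qed
next
  case (t_conv G e T1 T2)
  have "active_ok_ty T2" using typing_active_ok(2)[OF \<open>wfty L [] T2\<close>] by blast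
  moreover have "active_ok_tm e" using typing_active_ok(3)[OF \<open>typing L [] e T1\<close>] by blast
  moreover have "sat_refines L e T1" using t_conv by simp
  ultimately show ?case
    using sat_refines_tyequiv[OF fh_sig_ok_tt_ne_ff[OF \<open>fh_sig_ok L\<close>] \<open>tyequiv L T1 T2\<close>] by blast
next
  case (t_forget G v T e)
  then show ?case by (simp add: sat_refines_def)
next
  case (t_exact G v T e)
  have "step L (App (Lam T e) v) (subst_tm 0 v e)"
    using step_red[of "[]"] red_beta[OF \<open>is_val v\<close>] by fastforce
  with t_exact show ?case by (simp add: sat_refines_def)
qed (simp_all add: sat_refines_def)

theorem mainTheorem6:
  fixes L :: "('b, 'k, 'o) fh_sig"
  assumes "fh_sig_ok L"
    and "is_val v"
    and "typing L [] v T"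
  shows "\<forall>w \<in> refines T. steps L (App w v) (Const (tt L))"
  using typing_val_sat_refines(3)[OF assms(3,1) refl assms(2)] unfolding sat_refines_def .

end
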